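(* Let $1<p<\infty$, let $a,b$ be as in the context, and let $w=(w_n)_{n\ge0}$ be nonzero complex numbers with $$\sup_{n\ge0}\Big|\frac{w_na_n}{a_{n+1}}\Big|<\infty\quad\text{and}\quad\limsup_{n\to\infty}\Big|\frac{b_n}{a_{n+1}}\Big|<1 .$$ Then the following are equivalent: (i) $F_w^*$ is hypercyclic on $(\ell^p_{a,b})^*$; (ii) there exist $\phi\in(\ell^p_{a,b})^*$, a nonzero $\psi\in(\ell^p_{a,b})^*$ and a strictly increasing sequence $(n_k)$ with $(F_w^* )^{n_k}\phi\to\psi$ weakly; (iii) there exist $\phi\in(\ell^p_{a,b})^*$, a nonzero $\psi\in(\ell^p_{a,b})^*$ and a strictly increasing sequence $(n_k)$ with $(F_w^* )^{n_k}\phi\to\psi$ in norm.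
   Context: Let $a=(a_n)_{n\ge0}$, $b=(b_n)_{n\ge0}$ be sequences of nonzero complex numbers with $\limsup_{n\to\infty}(|a_n|+|b_n|)^{1/n}<\infty$, and let $R=1/\limsup_{n}(|a_n|+|b_n|)^{1/n}\in(0,\infty]$. For $n\ge0$ let $f_n(z)=(a_n+b_nz)z^n$. For $1\le p<\infty$, $\ell^p_{a,b}$ is the space of analytic functions on $\{|z|<R\}$ of the form $f=\sum_{n\ge0}\lambda_nf_n$ with $(\lambda_n)\in\ell^p(\mathbb{N}_0)$ (the series converges locally uniformly on $\{|z|<R\}$ and the $\lambda_n$ are uniquely determined by $f$), normed by $\|f\|=(\sum_n|\lambda_n|^p)^{1/p}$. The weighted forward shift is $F_w\big(\sum_{n\ge0}\mu_nz^n\big)=\sum_{n\ge0}\mu_nw_nz^{n+1}$ (bounded on $\ell^p_{a,b}$ under the hypotheses); $F_w^*$ is its adjoint. Hypercyclic means having a dense orbit. *)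

theory Defs
  imports "HOL-Analysis.Analysis"
begin

type_synonym cfun = "complex \<Rightarrow> complex"
type_synonym cfunctional = "cfun \<Rightarrow> complex"

definition fab :: "(nat \<Rightarrow> complex) \<Rightarrow> (nat \<Rightarrow> complex) \<Rightarrow> nat \<Rightarrow> cfun" where
  "fab a b n z = (a n + b n * z) * z ^ n"

text \<open>The disc |z| < R with R = 1 / limsup (|a_n|+|b_n|)^(1/n) (R = infinity if the limsup is 0).\<close>
definition Rdisc :: "(nat \<Rightarrow> complex) \<Rightarrow> (nat \<Rightarrow> complex) \<Rightarrow> complex set" where
  "Rdisc a b = {z. ereal (cmod z) *
      limsup (\<lambda>n. ereal ((cmod (a n) + cmod (b n)) powr (1 / real n))) < 1}"

definition represents :: "(nat \<Rightarrow> complex) \<Rightarrow> (nat \<Rightarrow> complex) \<Rightarrow> real \<Rightarrow> (nat \<Rightarrow> complex) \<Rightarrow> cfun \<Rightarrow> bool" where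
  "represents a b p lam f \<longleftrightarrow>
     summable (\<lambda>n. cmod (lam n) powr p) \<and>
     (\<forall>z\<in>Rdisc a b. (\<lambda>n. lam n * fab a b n z) sums f z) \<and>
     (\<forall>z. z \<notin> Rdisc a b \<longrightarrow> f z = 0)"

definition lpab :: "(nat \<Rightarrow> complex) \<Rightarrow> (nat \<Rightarrow> complex) \<Rightarrow> real \<Rightarrow> cfun set" where
  "lpab a b p = {f. \<exists>lam. represents a b p lam f}"

definition coefs :: "(nat \<Rightarrow> complex) \<Rightarrow> (nat \<Rightarrow> complex) \<Rightarrow> real \<Rightarrow> cfun \<Rightarrow> nat \<Rightarrow> complex" where
  "coefs a b p f = (THE lam. represents a b p lam f)"

definition lpab_norm :: "(nat \<Rightarrow> complex) \<Rightarrow> (nat \<Rightarrow> complex) \<Rightarrow> real \<Rightarrow> cfun \<Rightarrow> real" where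
  "lpab_norm a b p f = (\<Sum>n. cmod (coefs a b p f n) powr p) powr (1 / p)"

definition taylor_coeff :: "cfun \<Rightarrow> nat \<Rightarrow> complex" where
  "taylor_coeff f n = (deriv ^^ n) f 0 / fact n"

definition Fw :: "(nat \<Rightarrow> complex) \<Rightarrow> (nat \<Rightarrow> complex) \<Rightarrow> (nat \<Rightarrow> complex) \<Rightarrow> cfun \<Rightarrow> cfun" where
  "Fw a b w f = (\<lambda>z. if z \<in> Rdisc a b
       then (\<Sum>n. taylor_coeff f n * w n * z ^ Suc n) else 0)"

definition dual :: "(nat \<Rightarrow> complex) \<Rightarrow> (nat \<Rightarrow> complex) \<Rightarrow> real \<Rightarrow> cfunctional set" where
  "dual a b p = {\<phi>.
     (\<forall>f\<in>lpab a b p. \<forall>g\<in>lpab a b p. \<phi> (\<lambda>z. f z + g z) = \<phi> f + \<phi> g) \<and>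
     (\<forall>c. \<forall>f\<in>lpab a b p. \<phi> (\<lambda>z. c * f z) = c * \<phi> f) \<and>
     (\<exists>C. \<forall>f\<in>lpab a b p. cmod (\<phi> f) \<le> C * lpab_norm a b p f) \<and>
     (\<forall>f. f \<notin> lpab a b p \<longrightarrow> \<phi> f = 0)}"

definition dual_norm :: "(nat \<Rightarrow> complex) \<Rightarrow> (nat \<Rightarrow> complex) \<Rightarrow> real \<Rightarrow> cfunctional \<Rightarrow> real" where
  "dual_norm a b p \<phi> = Sup {cmod (\<phi> f) | f. f \<in> lpab a b p \<and> lpab_norm a b p f \<le> 1}"

text \<open>Bounded linear functionals on the dual space (the bidual), for the weak topology.\<close>
definition bidual :: "(nat \<Rightarrow> complex) \<Rightarrow> (nat \<Rightarrow> complex) \<Rightarrow> real \<Rightarrow> (cfunctional \<Rightarrow> complex) set" where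
  "bidual a b p = {\<Lambda>.
     (\<forall>\<phi>\<in>dual a b p. \<forall>\<theta>\<in>dual a b p. \<Lambda> (\<lambda>f. \<phi> f + \<theta> f) = \<Lambda> \<phi> + \<Lambda> \<theta>) \<and>
     (\<forall>c. \<forall>\<phi>\<in>dual a b p. \<Lambda> (\<lambda>f. c * \<phi> f) = c * \<Lambda> \<phi>) \<and>
     (\<exists>C. \<forall>\<phi>\<in>dual a b p. cmod (\<Lambda> \<phi>) \<le> C * dual_norm a b p \<phi>)}"

definition Fw_adj :: "(nat \<Rightarrow> complex) \<Rightarrow> (nat \<Rightarrow> complex) \<Rightarrow> real \<Rightarrow> (nat \<Rightarrow> complex) \<Rightarrow> cfunctional \<Rightarrow> cfunctional" where
  "Fw_adj a b p w \<phi> = (\<lambda>f. if f \<in> lpab a b p then \<phi> (Fw a b w f) else 0)"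

definition adj_hypercyclic :: "(nat \<Rightarrow> complex) \<Rightarrow> (nat \<Rightarrow> complex) \<Rightarrow> real \<Rightarrow> (nat \<Rightarrow> complex) \<Rightarrow> bool" where
  "adj_hypercyclic a b p w \<longleftrightarrow> (\<exists>\<phi>\<in>dual a b p. \<forall>\<psi>\<in>dual a b p. \<forall>e>0. \<exists>n.
      dual_norm a b p (\<lambda>f. (Fw_adj a b p w ^^ n) \<phi> f - \<psi> f) < e)"

end

theory Submission
  imports Defs "HOL-Analysis.FPS_Convergence"
begin

text \<open>
  Coefficients identify \<open>\<ell>\<^sup>p\<^sub>a\<^sub>,\<^sub>b\<close> with \<open>\<ell>\<^sup>p\<close>. Because \<open>|b\<^sub>n / a\<^sub>n\<^sub>+\<^sub>1|\<close> is eventually below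
  \<open>1\<close>, the recursion that recovers the coefficients of \<open>f\<close> from its Taylor coefficients divided by
  \<open>a\<^sub>n\<close> is bounded on \<open>\<ell>\<^sup>p\<close>; hence every functional is given by a sequence \<open>t \<in> \<ell>\<^sup>q\<close>, acting on
  these scaled Taylor coefficients, and \<open>F\<^sub>w\<^sup>*\<close> becomes the backward shift on \<open>\<ell>\<^sup>q\<close> with weights
  \<open>v\<^sub>n = w\<^sub>n a\<^sub>n / a\<^sub>n\<^sub>+\<^sub>1\<close>. All three conditions are then equivalent to the products \<open>v\<^sub>0 \<cdots> v\<^sub>n\<^sub>-\<^sub>1\<close>
  being unbounded: a dense orbit returns near every point at arbitrarily late times, giving (iii);
  norm convergence implies weak convergence; if the products were bounded, the orbit of any
  functional would tend to \<open>0\<close> on every monomial, so a weak limit would vanish; and unbounded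
  products yield a hypercyclic functional by the usual block construction for backward shifts.
\<close>

section \<open>Sequences in \<open>\<ell>\<^sup>r\<close>\<close>

definition lp :: "real \<Rightarrow> (nat \<Rightarrow> complex) \<Rightarrow> bool" where
  "lp r x \<longleftrightarrow> summable (\<lambda>n. cmod (x n) powr r)"

definition lpsum :: "real \<Rightarrow> (nat \<Rightarrow> complex) \<Rightarrow> real" where
  "lpsum r x = (\<Sum>n. cmod (x n) powr r)"

lemma lpsum_nonneg: "lp r x \<Longrightarrow> lpsum r x \<ge> 0"
  unfolding lpsum_def lp_def by (auto intro: suminf_nonneg)

lemma sum_le_lpsum: "lp r x \<Longrightarrow> (\<Sum>n\<in>A. cmod (x n) powr r) \<le> lpsum r x"
  unfolding lp_def lpsum_def by (cases "finite A") (auto intro: sum_le_suminf suminf_nonneg)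

lemma norm_le_lpsum_powr:
  assumes "lp r x" "r > 0"
  shows "cmod (x n) \<le> lpsum r x powr (1/r)"
proof -
  have "cmod (x n) = (cmod (x n) powr r) powr (1/r)" using assms by (simp add: powr_powr)
  also have "\<dots> \<le> lpsum r x powr (1/r)"
    using sum_le_lpsum[OF assms(1), of "{n}"] assms by (intro powr_mono2) auto
  finally show ?thesis .
qed

lemma lpsum_eq_0_imp: "lp r x \<Longrightarrow> lpsum r x = 0 \<Longrightarrow> r > 0 \<Longrightarrow> x n = 0"
  using norm_le_lpsum_powr[of r x n] by simp

lemma lp_lpsum_bounded:
  assumes "\<And>N. (\<Sum>n<N. cmod (x n) powr r) \<le> C"
  shows "lp r x" "lpsum r x \<le> C"
proof -
  show "lp r x" unfolding lp_def by (rule summableI_nonneg_bounded[OF _ assms]) simp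
  then show "lpsum r x \<le> C" unfolding lp_def lpsum_def by (intro suminf_le_const assms)
qed

lemma lp_finite_support:
  assumes "\<And>n. n \<ge> N \<Longrightarrow> x n = 0" "r > 0"
  shows "lp r x"
  unfolding lp_def by (rule summable_finite[of "{..<N}"]) (use assms in auto)

lemma lpsum_le_finite_support:
  assumes "\<And>n. n \<ge> N \<Longrightarrow> x n = 0" "\<And>n. n < N \<Longrightarrow> cmod (x n) \<le> \<delta>" "r > 0"
  shows "lpsum r x \<le> real N * \<delta> powr r"
proof -
  have "lpsum r x = (\<Sum>n. if n \<in> {..<N} then cmod (x n) powr r else 0)"
    unfolding lpsum_def using assms(1,3) by (intro suminf_cong) (auto simp: not_less)
  also have "\<dots> = (\<Sum>n<N. cmod (x n) powr r)"
    by (rule sums_unique[symmetric], rule sums_If_finite_set) auto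
  also have "\<dots> \<le> (\<Sum>n<N. \<delta> powr r)"
    using assms(2,3) by (intro sum_mono powr_mono2) auto
  finally show ?thesis by simp
qed

lemma lpsum_truncate:
  assumes "r > 0"
  shows "lp r (\<lambda>k. if k < N then x k else 0)"
    and "lpsum r (\<lambda>k. if k < N then x k else 0) = (\<Sum>k<N. cmod (x k) powr r)"
proof -
  have e: "(\<lambda>k. cmod (if k < N then x k else 0) powr r) =
      (\<lambda>k. if k \<in> {..<N} then cmod (x k) powr r else 0)"
    using assms by auto
  have "(\<lambda>k. cmod (if k < N then x k else 0) powr r) sums (\<Sum>k<N. cmod (x k) powr r)"
    unfolding e by (rule sums_If_finite_set) auto
  then show "lp r (\<lambda>k. if k < N then x k else 0)"
    "lpsum r (\<lambda>k. if k < N then x k else 0) = (\<Sum>k<N. cmod (x k) powr r)"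
    by (auto simp: lp_def lpsum_def sums_iff)
qed

lemma powr_add_le_convex:
  fixes u y s r :: real
  assumes "u \<ge> 0" "y \<ge> 0" "0 < s" "s < 1" "r \<ge> 1"
  shows "(u + y) powr r \<le> (1 - s) powr (1 - r) * u powr r + s powr (1 - r) * y powr r"
proof -
  have ge1: "t powr (1 - r) \<ge> 1" if "0 < t" "t < 1" for t :: real
    using that assms(5) by (smt (verit) powr01_less_one)
  consider "u = 0" | "y = 0" | "u > 0" "y > 0" using assms by linarith
  then show ?thesis
  proof cases
    case 1
    then show ?thesis using ge1[of s] assms by (simp add: mult_le_cancel_right1)
  next
    case 2
    then show ?thesis using ge1[of "1 - s"] assms by (simp add: mult_le_cancel_right1)
  next
    case 3
    have "(u + y) powr r = ((1 - s) *\<^sub>R (u / (1 - s)) + s *\<^sub>R (y / s)) powr r"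
      using assms by simp
    also have "\<dots> \<le> (1 - s) * (u / (1 - s)) powr r + s * (y / s) powr r"
      using 3 assms by (intro convex_onD[OF powr_convex]) auto
    also have "(1 - s) * (u / (1 - s)) powr r = (1 - s) powr (1 - r) * u powr r"
      using assms by (simp add: powr_divide powr_diff)
    also have "s * (y / s) powr r = s powr (1 - r) * y powr r"
      using assms by (simp add: powr_divide powr_diff)
    finally show ?thesis .
  qed
qed

lemma powr_add_le_half:
  fixes u y r :: real
  assumes "u \<ge> 0" "y \<ge> 0" "r \<ge> 1"
  shows "(u + y) powr r \<le> 2 powr (r - 1) * (u powr r + y powr r)"
proof -
  have half: "(1/2::real) powr (1 - r) = 2 powr (r - 1)"
    by (simp add: powr_divide powr_diff)
  show ?thesis
    using powr_add_le_convex[OF assms(1,2), of "1/2" r] assms(3)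
    by (simp add: half algebra_simps)
qed

lemma norm_add_powr_le:
  assumes "r \<ge> 1"
  shows "cmod (x + y) powr r \<le> 2 powr (r - 1) * (cmod x powr r + cmod y powr r)"
proof -
  have "cmod (x + y) powr r \<le> (cmod x + cmod y) powr r"
    using assms by (intro powr_mono2) (auto intro: norm_triangle_ineq)
  also have "\<dots> \<le> 2 powr (r - 1) * (cmod x powr r + cmod y powr r)"
    using assms by (intro powr_add_le_half) auto
  finally show ?thesis .
qed

lemma lp_add:
  assumes "lp r x" "lp r y" "r \<ge> 1"
  shows "lp r (\<lambda>n. x n + y n)"
    and "lpsum r (\<lambda>n. x n + y n) \<le> 2 powr (r - 1) * (lpsum r x + lpsum r y)"
proof -
  let ?g = "\<lambda>n. 2 powr (r - 1) * (cmod (x n) powr r + cmod (y n) powr r)"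
  have g: "summable ?g" using assms unfolding lp_def by (intro summable_mult summable_add)
  have le: "cmod (x n + y n) powr r \<le> ?g n" for n by (rule norm_add_powr_le[OF assms(3)])
  show s: "lp r (\<lambda>n. x n + y n)"
    unfolding lp_def by (rule summable_comparison_test'[OF g, of 0]) (use le in auto)
  have "lpsum r (\<lambda>n. x n + y n) \<le> suminf ?g"
    unfolding lpsum_def using s g le unfolding lp_def by (intro suminf_le) auto
  also have "\<dots> = 2 powr (r - 1) * (lpsum r x + lpsum r y)"
    using assms unfolding lp_def lpsum_def by (simp add: suminf_mult suminf_add summable_add)
  finally show "lpsum r (\<lambda>n. x n + y n) \<le> 2 powr (r - 1) * (lpsum r x + lpsum r y)" .
qed

lemma lp_scale: "lp r x \<Longrightarrow> lp r (\<lambda>n. c * x n)"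
  unfolding lp_def by (simp add: norm_mult powr_mult summable_mult)

lemma lpsum_scale: "lp r x \<Longrightarrow> lpsum r (\<lambda>n. c * x n) = cmod c powr r * lpsum r x"
  unfolding lpsum_def lp_def by (simp add: norm_mult powr_mult suminf_mult)

lemma lp_diff: "lp r x \<Longrightarrow> lp r y \<Longrightarrow> r \<ge> 1 \<Longrightarrow> lp r (\<lambda>n. x n - y n)"
  using lp_add(1)[OF _ lp_scale[of r y "-1"]] by simp

lemma lp_mult_bounded:
  assumes "lp r x" "r > 0" "\<And>n. cmod (m n) \<le> C"
  shows "lp r (\<lambda>n. m n * x n)" and "lpsum r (\<lambda>n. m n * x n) \<le> C powr r * lpsum r x"
proof -
  have C0: "C \<ge> 0" using assms(3)[of 0] by (meson norm_ge_zero order.trans)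
  have le: "cmod (m n * x n) powr r \<le> C powr r * cmod (x n) powr r" for n
  proof -
    have "cmod (m n * x n) powr r \<le> (C * cmod (x n)) powr r"
      using assms(2,3) by (intro powr_mono2) (auto simp: norm_mult mult_right_mono)
    also have "\<dots> = C powr r * cmod (x n) powr r" using C0 by (simp add: powr_mult)
    finally show ?thesis .
  qed
  show l: "lp r (\<lambda>n. m n * x n)" unfolding lp_def
    by (rule summable_comparison_test'[of "\<lambda>n. C powr r * cmod (x n) powr r" 0])
       (use assms(1) le in \<open>auto simp: lp_def intro: summable_mult\<close>)
  show "lpsum r (\<lambda>n. m n * x n) \<le> C powr r * lpsum r x"
    unfolding lpsum_def using l assms(1) le unfolding lp_def
    by (subst suminf_mult[symmetric]) (auto intro!: suminf_le summable_mult)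
qed

definition shift_right :: "(nat \<Rightarrow> 'a::zero) \<Rightarrow> nat \<Rightarrow> 'a" where
  "shift_right x n = (case n of 0 \<Rightarrow> 0 | Suc k \<Rightarrow> x k)"

definition shift_left :: "(nat \<Rightarrow> 'a) \<Rightarrow> nat \<Rightarrow> 'a" where
  "shift_left x n = x (Suc n)"

lemma sums_shift_right:
  fixes x :: "nat \<Rightarrow> 'a::real_normed_vector"
  assumes "x sums s"
  shows "shift_right x sums s"
proof -
  have "(\<lambda>n. shift_right x (Suc n)) sums s" using assms by (simp add: shift_right_def)
  then show ?thesis by (subst (asm) sums_Suc_iff) (simp add: shift_right_def)
qed

lemma lp_shift_right:
  assumes "lp r x" "r > 0"
  shows "lp r (shift_right x)" and "lpsum r (shift_right x) = lpsum r x"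
proof -
  have "(\<lambda>n. cmod (x n) powr r) sums lpsum r x"
    using assms unfolding lp_def lpsum_def by (simp add: summable_sums)
  moreover have "(\<lambda>n. cmod (shift_right x n) powr r) = shift_right (\<lambda>n. cmod (x n) powr r)"
    using assms by (auto simp: shift_right_def split: nat.split)
  ultimately have "(\<lambda>n. cmod (shift_right x n) powr r) sums lpsum r x"
    by (simp add: sums_shift_right)
  then show "lp r (shift_right x)" "lpsum r (shift_right x) = lpsum r x"
    unfolding lp_def lpsum_def by (auto simp: sums_iff)
qed

lemma lp_shift_left:
  assumes "lp r x"
  shows "lp r (shift_left x)" and "lpsum r (shift_left x) \<le> lpsum r x"
proof -
  show "lp r (shift_left x)" using assms unfolding lp_def shift_left_def by (subst summable_Suc_iff)
  have "lpsum r x = (\<Sum>n. cmod (x (Suc n)) powr r) + cmod (x 0) powr r"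
    using assms unfolding lpsum_def lp_def by (subst suminf_split_head) auto
  then show "lpsum r (shift_left x) \<le> lpsum r x" by (simp add: lpsum_def shift_left_def)
qed

definition tail :: "nat \<Rightarrow> (nat \<Rightarrow> complex) \<Rightarrow> nat \<Rightarrow> complex" where
  "tail N x k = (if k < N then 0 else x k)"

lemma lp_tail: "lp r x \<Longrightarrow> lp r (tail N x)"
  unfolding lp_def tail_def
  by (rule summable_comparison_test'[of "\<lambda>n. cmod (x n) powr r" 0]) auto

lemma lpsum_tail_tendsto_0:
  assumes "lp r x"
  shows "(\<lambda>N. lpsum r (tail N x)) \<longlonglongrightarrow> 0"
proof -
  let ?f = "\<lambda>n. cmod (x n) powr r"
  have s: "summable ?f" using assms by (simp add: lp_def)
  have "lpsum r (tail N x) = suminf ?f - (\<Sum>n<N. ?f n)" for N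
  proof -
    have "(\<lambda>n. ?f n - (if n \<in> {..<N} then ?f n else 0)) sums (suminf ?f - (\<Sum>n\<in>{..<N}. ?f n))"
      using s by (intro sums_diff sums_If_finite_set) (auto simp: summable_sums)
    moreover have "(\<lambda>n. ?f n - (if n \<in> {..<N} then ?f n else 0)) = (\<lambda>n. cmod (tail N x n) powr r)"
      by (auto simp: tail_def)
    ultimately show ?thesis by (simp add: lpsum_def sums_iff)
  qed
  moreover have "(\<lambda>N. suminf ?f - (\<Sum>n<N. ?f n)) \<longlonglongrightarrow> suminf ?f - suminf ?f"
    using s by (intro tendsto_diff tendsto_const summable_LIMSEQ)
  ultimately show ?thesis by simp
qed

lemma lpsum_tail_powr_tendsto_0:
  assumes "lp r x" "r > 0"
  shows "(\<lambda>N. lpsum r (tail N x) powr (1/r)) \<longlonglongrightarrow> 0"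
  using assms lp_tail[OF assms(1)]
  by (intro tendsto_zero_powrI[OF lpsum_tail_tendsto_0[OF assms(1)] tendsto_const[of "1/r"]])
     (auto intro!: always_eventually lpsum_nonneg)

lemma holder_lp:
  assumes r: "1 < r" "1 < s" "1/r + 1/s = 1" and x: "lp r x" and y: "lp s y"
  shows "summable (\<lambda>n. cmod (x n * y n))"
    and "(\<Sum>n. cmod (x n * y n)) \<le> lpsum r x powr (1/r) * lpsum s y powr (1/s)"
proof -
  have young: "u * v \<le> u powr r / r + v powr s / s" if "u \<ge> 0" "v \<ge> 0" for u v :: real
    using Youngs_inequality[OF r that] .
  show sm: "summable (\<lambda>n. cmod (x n * y n))"
  proof (rule summable_comparison_test'[of "\<lambda>n. cmod (x n) powr r / r + cmod (y n) powr s / s" 0])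
    show "summable (\<lambda>n. cmod (x n) powr r / r + cmod (y n) powr s / s)"
      using x y by (auto simp: lp_def intro!: summable_add summable_divide)
  qed (use young in \<open>auto simp: norm_mult\<close>)
  define A where "A = lpsum r x powr (1/r)"
  define B where "B = lpsum s y powr (1/s)"
  show "(\<Sum>n. cmod (x n * y n)) \<le> A * B"
  proof (cases "A = 0 \<or> B = 0")
    case True
    then have "\<forall>n. x n * y n = 0"
      using lpsum_eq_0_imp[OF x] lpsum_eq_0_imp[OF y] lpsum_nonneg[OF x] lpsum_nonneg[OF y] r
      by (auto simp: A_def B_def)
    then have "(\<lambda>n. cmod (x n * y n)) = (\<lambda>n. 0)" by auto
    then show ?thesis by (simp add: A_def B_def)
  next
    case False
    then have AB: "A > 0" "B > 0" by (auto simp: A_def B_def)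
    have Ar: "A powr r = lpsum r x" "B powr s = lpsum s y"
      using lpsum_nonneg[OF x] lpsum_nonneg[OF y] r by (auto simp: A_def B_def powr_powr)
    have scaled: "cmod (x n * y n) / (A * B) \<le>
        (cmod (x n) powr r / lpsum r x) / r + (cmod (y n) powr s / lpsum s y) / s" for n
      using young[of "cmod (x n) / A" "cmod (y n) / B"] AB
      by (simp add: norm_mult powr_divide Ar[symmetric])
    have "(\<Sum>n. cmod (x n * y n)) / (A * B) = (\<Sum>n. cmod (x n * y n) / (A * B))"
      using sm by (simp add: suminf_divide)
    also have "\<dots> \<le> (\<Sum>n. (cmod (x n) powr r / lpsum r x) / r + (cmod (y n) powr s / lpsum s y) / s)"
      using sm x y scaled unfolding lp_def
      by (intro suminf_le) (auto intro!: summable_add summable_divide)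
    also have "\<dots> = (lpsum r x / lpsum r x) / r + (lpsum s y / lpsum s y) / s"
      using x y unfolding lp_def lpsum_def
      by (subst suminf_add[symmetric]) (auto simp: suminf_divide intro!: summable_divide)
    also have "\<dots> = 1" using AB Ar r by auto
    finally show ?thesis using AB by (simp add: divide_le_eq)
  qed
qed

lemma holder_lp_sum:
  assumes "1 < r" "1 < s" "1/r + 1/s = 1" "lp r x" "lp s y"
  shows "summable (\<lambda>n. x n * y n)"
    and "cmod (\<Sum>n. x n * y n) \<le> lpsum r x powr (1/r) * lpsum s y powr (1/s)"
  using summable_norm_cancel[OF holder_lp(1)[OF assms]]
    summable_norm[OF holder_lp(1)[OF assms]] holder_lp(2)[OF assms] by auto


lemma sum_le_contraction:
  fixes y g :: "nat \<Rightarrow> real"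
  assumes "y 0 \<le> g 0" "\<And>n. y (Suc n) \<le> g (Suc n) + s * y n"
    and "\<And>m. (\<Sum>n<m. g n) \<le> T" "0 \<le> s" "s < 1"
  shows "(\<Sum>n<m. y n) \<le> T / (1 - s)"
proof (induction m)
  case 0
  then show ?case using assms(3)[of 0] assms(5) by simp
next
  case (Suc m)
  have "(\<Sum>n<Suc m. y n) = y 0 + (\<Sum>n<m. y (Suc n))" by (rule sum.lessThan_Suc_shift)
  also have "\<dots> \<le> g 0 + (\<Sum>n<m. g (Suc n) + s * y n)"
    using assms(1,2) by (intro add_mono sum_mono) auto
  also have "\<dots> = (\<Sum>n<Suc m. g n) + s * (\<Sum>n<m. y n)"
    by (simp only: sum.distrib sum_distrib_left sum.lessThan_Suc_shift add.assoc)
  also have "\<dots> \<le> T + s * (T / (1 - s))"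
    using assms(3)[of "Suc m"] Suc assms(4) by (intro add_mono mult_left_mono) auto
  also have "\<dots> = T / (1 - s)" using assms(5) by (simp add: field_simps)
  finally show ?case .
qed

lemma norm_diff_mult_powr_le:
  assumes "r \<ge> 1" "cmod k \<le> K"
  shows "cmod (u - k * v) powr r \<le> 2 powr (r - 1) * (cmod u powr r + K powr r * cmod v powr r)"
proof -
  have K: "K \<ge> 0" using assms(2) norm_ge_zero order.trans by blast
  have "cmod (u - k * v) \<le> cmod u + K * cmod v"
    using norm_triangle_ineq4[of u "k * v"] mult_right_mono[OF assms(2) norm_ge_zero[of v]]
    by (simp add: norm_mult)
  then have "cmod (u - k * v) powr r \<le> (cmod u + K * cmod v) powr r"
    using assms by (intro powr_mono2) auto
  also have "\<dots> \<le> 2 powr (r - 1) * (cmod u powr r + (K * cmod v) powr r)"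
    using assms K by (intro powr_add_le_half) auto
  finally show ?thesis using K by (simp add: powr_mult)
qed

lemma norm_diff_mult_powr_le_contraction:
  assumes "r \<ge> 1" "0 < s" "s < 1" "cmod k \<le> s"
  shows "cmod (u - k * v) powr r \<le> (1 - s) powr (1 - r) * cmod u powr r + s * cmod v powr r"
proof -
  have "cmod (u - k * v) \<le> cmod u + s * cmod v"
    using norm_triangle_ineq4[of u "k * v"] mult_right_mono[OF assms(4) norm_ge_zero[of v]]
    by (simp add: norm_mult)
  then have "cmod (u - k * v) powr r \<le> (cmod u + s * cmod v) powr r"
    using assms by (intro powr_mono2) auto
  also have "\<dots> \<le> (1 - s) powr (1 - r) * cmod u powr r + s powr (1 - r) * (s * cmod v) powr r"
    using assms by (intro powr_add_le_convex) auto
  also have "s powr (1 - r) * (s * cmod v) powr r = s * cmod v powr r"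
    using assms by (simp add: powr_mult mult_ac powr_diff powr_minus_divide)
  finally show ?thesis .
qed

text \<open>The finitely many large coefficients \<open>\<kappa> n\<close>, \<open>n < N\<close>, are absorbed by the weights
  \<open>\<theta> n = (2 B)^(N - n)\<close> with \<open>B = 2^(r-1) K^r\<close>, which turn every step of the recursion
  \<open>x (n+1) = \<rho> (n+1) - \<kappa> n * x n\<close> into a contraction by \<open>s\<close>.\<close>

lemma weighted_recursion_step:
  fixes \<kappa> \<rho> x :: "nat \<Rightarrow> complex"
  assumes r: "r \<ge> 1" and s: "1/2 \<le> s" "s < 1" and K: "\<And>n. cmod (\<kappa> n) \<le> K"
    and \<kappa>: "\<And>n. n \<ge> N \<Longrightarrow> cmod (\<kappa> n) \<le> s"
    and A: "A \<ge> 2 powr (r - 1)" "A \<ge> (1 - s) powr (1 - r)"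
    and x: "x (Suc n) = \<rho> (Suc n) - \<kappa> n * x n"
  defines "\<theta> \<equiv> \<lambda>n. (2 * (2 powr (r - 1) * K powr r)) ^ (N - n)"
  shows "\<theta> (Suc n) * cmod (x (Suc n)) powr r \<le>
    A * \<theta> (Suc n) * cmod (\<rho> (Suc n)) powr r + s * (\<theta> n * cmod (x n) powr r)"
proof (cases "n \<ge> N")
  case True
  then have \<theta>1: "\<theta> (Suc n) = 1" "\<theta> n = 1" by (auto simp: \<theta>_def)
  have "cmod (x (Suc n)) powr r \<le>
      (1 - s) powr (1 - r) * cmod (\<rho> (Suc n)) powr r + s * cmod (x n) powr r"
    unfolding x using r s \<kappa>[OF True] by (intro norm_diff_mult_powr_le_contraction) auto
  also have "(1 - s) powr (1 - r) * cmod (\<rho> (Suc n)) powr r \<le> A * cmod (\<rho> (Suc n)) powr r"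
    using A by (intro mult_right_mono) auto
  finally show ?thesis by (simp add: \<theta>1)
next
  case False
  have \<theta>0: "0 \<le> \<theta> n" for n using K[of 0] by (simp add: \<theta>_def)
  from False have "N - n = Suc (N - Suc n)" by arith
  then have \<theta>n: "\<theta> n = 2 * (2 powr (r - 1) * K powr r) * \<theta> (Suc n)"
    unfolding \<theta>_def by (simp only: power_Suc)
  have "\<theta> (Suc n) * cmod (x (Suc n)) powr r \<le>
      \<theta> (Suc n) * (2 powr (r - 1) * (cmod (\<rho> (Suc n)) powr r + K powr r * cmod (x n) powr r))"
    unfolding x using r K \<theta>0 by (intro mult_left_mono norm_diff_mult_powr_le) auto
  also have "\<dots> = 2 powr (r - 1) * \<theta> (Suc n) * cmod (\<rho> (Suc n)) powr r + (1/2) * (\<theta> n * cmod (x n) powr r)"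
    by (simp add: \<theta>n algebra_simps)
  also have "\<dots> \<le> A * \<theta> (Suc n) * cmod (\<rho> (Suc n)) powr r + s * (\<theta> n * cmod (x n) powr r)"
    using \<theta>0 s A by (intro add_mono mult_right_mono) auto
  finally show ?thesis .
qed

lemma lp_contracting_recursion:
  fixes \<kappa> :: "nat \<Rightarrow> complex"
  assumes r: "r \<ge> 1" and s: "s < 1" and \<kappa>: "\<And>n. n \<ge> N \<Longrightarrow> cmod (\<kappa> n) \<le> s"
  obtains C where "C > 0"
    and "\<And>\<rho> x. lp r \<rho> \<Longrightarrow> x 0 = \<rho> 0 \<Longrightarrow> (\<And>n. x (Suc n) = \<rho> (Suc n) - \<kappa> n * x n) \<Longrightarrow>
           lp r x \<and> lpsum r x \<le> C * lpsum r \<rho>"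
proof -
  define s' where "s' = max s (1/2)"
  define K where "K = 1 + (\<Sum>n<N. cmod (\<kappa> n))"
  define B where "B = 2 powr (r - 1) * K powr r"
  define A where "A = max (2 powr (r - 1)) ((1 - s') powr (1 - r))"
  define \<theta> where "\<theta> n = (2 * B) ^ (N - n)" for n
  have s': "0 < s'" "s' < 1" "s \<le> s'" "1/2 \<le> s'" using s by (auto simp: s'_def)
  have K: "cmod (\<kappa> n) \<le> K" "K \<ge> 1" for n
  proof -
    show K1: "K \<ge> 1" by (simp add: K_def sum_nonneg)
    show "cmod (\<kappa> n) \<le> K"
    proof (cases "n < N")
      case True
      then have "cmod (\<kappa> n) \<le> (\<Sum>n<N. cmod (\<kappa> n))" by (intro member_le_sum) auto
      then show ?thesis by (simp add: K_def)
    qed (use \<kappa>[of n] s K1 in auto)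
  qed
  have "2 powr (r - 1) \<ge> 1" "K powr r \<ge> 1" using r K(2) by (auto intro: ge_one_powr_ge_zero)
  then have AB: "A \<ge> 1" "B \<ge> 1"
    unfolding A_def B_def using mult_mono[of 1 "2 powr (r - 1)" 1 "K powr r"] by auto
  have \<theta>: "1 \<le> \<theta> n" "\<theta> n \<le> (2 * B) ^ N" for n
  proof -
    have "1 \<le> 2 * B" using AB by simp
    then show "1 \<le> \<theta> n" "\<theta> n \<le> (2 * B) ^ N"
      unfolding \<theta>_def by (rule one_le_power, rule power_increasing[OF diff_le_self])
  qed
  have \<theta>0: "0 \<le> \<theta> n" for n using \<theta>(1)[of n] by linarith
  define C where "C = A * (2 * B) ^ N / (1 - s')"
  show ?thesis
  proof
    show "C > 0" using AB s' by (simp add: C_def)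
    fix \<rho> x assume \<rho>: "lp r \<rho>" and x0: "x 0 = \<rho> 0"
      and xs: "\<And>n. x (Suc n) = \<rho> (Suc n) - \<kappa> n * x n"
    define y where "y n = \<theta> n * cmod (x n) powr r" for n
    define g where "g n = A * \<theta> n * cmod (\<rho> n) powr r" for n
    have step: "y (Suc n) \<le> g (Suc n) + s' * y n" for n
      using weighted_recursion_step[where r = r and s = s' and \<kappa> = \<kappa> and K = K and N = N and A = A and x = x and \<rho> = \<rho>, OF r s'(4,2) K(1)
          order.trans[OF \<kappa> s'(3)] _ _ xs]
      by (simp add: y_def g_def \<theta>_def B_def A_def)
    have "(\<Sum>n<m. g n) \<le> A * (2 * B) ^ N * lpsum r \<rho>" for m
    proof -
      have "(\<Sum>n<m. g n) \<le> (\<Sum>n<m. A * (2 * B) ^ N * cmod (\<rho> n) powr r)"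
        unfolding g_def using \<theta> AB by (intro sum_mono mult_right_mono mult_left_mono) auto
      also have "\<dots> = A * (2 * B) ^ N * (\<Sum>n<m. cmod (\<rho> n) powr r)"
        by (simp add: sum_distrib_left)
      also have "\<dots> \<le> A * (2 * B) ^ N * lpsum r \<rho>"
        using sum_le_lpsum[OF \<rho>, of "{..<m}"] AB by (intro mult_left_mono) auto
      finally show ?thesis .
    qed
    moreover have "y 0 \<le> g 0"
      using mult_right_mono[OF AB(1), of "\<theta> 0 * cmod (\<rho> 0) powr r"] \<theta>0[of 0]
      by (simp add: y_def g_def x0 mult.assoc)
    ultimately have y_sum: "(\<Sum>n<m. y n) \<le> A * (2 * B) ^ N * lpsum r \<rho> / (1 - s')" for m
      using step s' by (intro sum_le_contraction) auto
    have "(\<Sum>n<m. cmod (x n) powr r) \<le> C * lpsum r \<rho>" for m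
    proof -
      have "(\<Sum>n<m. cmod (x n) powr r) \<le> (\<Sum>n<m. y n)"
        unfolding y_def using \<theta> by (intro sum_mono) (simp add: mult_le_cancel_right1)
      also have "\<dots> \<le> A * (2 * B) ^ N * lpsum r \<rho> / (1 - s')" by (rule y_sum)
      finally show ?thesis by (simp add: C_def)
    qed
    then show "lp r x \<and> lpsum r x \<le> C * lpsum r \<rho>"
      using lp_lpsum_bounded[of x r] by blast
  qed
qed


lemma conjugate_exponent_vector:
  fixes c :: complex
  assumes "1 < s" "(s - 1) * r = s"
  obtains t where "t * c = of_real (cmod c powr s)" "cmod t powr r = cmod c powr s"
proof (cases "c = 0")
  case True
  then show ?thesis using that[of 0] assms by simp
next
  case False
  define t where "t = cnj c * of_real (cmod c powr (s - 2))"
  have sq: "cmod c ^ 2 = cmod c powr 2" using False by (simp add: powr_numeral)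
  have "t * c = of_real (cmod c powr (s - 2) * cmod c ^ 2)"
    using complex_norm_square[of c] by (simp add: t_def mult_ac)
  also have "cmod c powr (s - 2) * cmod c ^ 2 = cmod c powr s"
  proof -
    have "cmod c powr (s - 2) * cmod c powr 2 = cmod c powr s" by (subst powr_add[symmetric]) simp
    then show ?thesis by (simp only: sq)
  qed
  finally have "t * c = of_real (cmod c powr s)" .
  moreover have "cmod c powr 1 * cmod c powr (s - 2) = cmod c powr (s - 1)"
    by (subst powr_add[symmetric]) simp
  then have "cmod t = cmod c powr (s - 1)"
    using False by (simp add: t_def norm_mult)
  then have "cmod t powr r = cmod c powr s"
    using assms by (simp add: powr_powr)
  ultimately show ?thesis by (rule that)
qed

lemma le_powr_conjugate:
  fixes S C r s :: real
  assumes "1 < r" "1 < s" "1/r + 1/s = 1" and "S \<le> C * S powr (1/r)" "S \<ge> 0"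
  shows "S \<le> C powr s"
proof (cases "S = 0")
  case False
  then have S: "S > 0" using assms(5) by simp
  have "1/s = 1 - 1/r" using assms(3) by linarith
  then have "S powr (1/s) = S powr 1 / S powr (1/r)" by (simp only: powr_diff)
  also have "\<dots> = S / S powr (1/r)" using S by simp
  also have "\<dots> \<le> C" using assms(4) S by (simp add: divide_le_eq)
  finally have "(S powr (1/s)) powr s \<le> C powr s" using assms(2) by (intro powr_mono2) auto
  then show ?thesis using assms(2) S by (simp add: powr_powr)
qed simp

lemma sum_half_powers_le: "(\<Sum>i\<in>{Suc k..<K}. (1/2::real) ^ i) \<le> (1/2) ^ k"
proof -
  have "(\<Sum>i\<in>{Suc k..<K}. (1/2::real) ^ i) \<le> (\<Sum>i. (1/2::real) ^ (i + Suc k))"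
  proof (cases "Suc k \<le> K")
    case True
    have "(\<Sum>i\<in>{Suc k..<K}. (1/2::real) ^ i) = (\<Sum>i<K - Suc k. (1/2) ^ (i + Suc k))"
      using sum.shift_bounds_nat_ivl[of "\<lambda>i. (1/2::real) ^ i" 0 "Suc k" "K - Suc k"] True
      by (simp add: atLeast0LessThan)
    also have "\<dots> \<le> (\<Sum>i. (1/2::real) ^ (i + Suc k))"
      by (intro sum_le_suminf) (auto intro!: summable_mult2 simp: power_add)
    finally show ?thesis .
  qed (auto intro!: suminf_nonneg summable_mult2 simp: power_add)
  also have "(\<Sum>i. (1/2::real) ^ (i + Suc k)) = (\<Sum>i. (1/2::real) ^ i) * (1/2) ^ Suc k"
    by (subst suminf_mult2) (auto simp: power_add)
  also have "\<dots> = (1/2) ^ k" by (simp add: suminf_geometric)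
  finally show ?thesis .
qed

lemma unbounded_beyond:
  fixes f :: "nat \<Rightarrow> real"
  assumes "\<not> bdd_above (range f)"
  obtains n where "n \<ge> L" "f n > H"
proof (rule ccontr)
  assume "\<not> thesis"
  have "f n \<le> max H (Max (f ` {..<L}))" for n
  proof (cases "n < L")
    case True
    then have "f n \<le> Max (f ` {..<L})" by (intro Max_ge) auto
    then show ?thesis by simp
  next
    case False
    then have "\<not> H < f n" using that[of n] \<open>\<not> thesis\<close> by auto
    then show ?thesis by simp
  qed
  then have "bdd_above (range f)" by (intro bdd_aboveI[of _ "max H (Max (f ` {..<L}))"]) auto
  with assms show False by simp
qed

definition complex_of_rat_pair :: "rat \<times> rat \<Rightarrow> complex" where
  "complex_of_rat_pair r = Complex (of_rat (fst r)) (of_rat (snd r))"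

definition seq_of_rat_list :: "(rat \<times> rat) list \<Rightarrow> nat \<Rightarrow> complex" where
  "seq_of_rat_list l n = (if n < length l then complex_of_rat_pair (l ! n) else 0)"

text \<open>Row \<open>k\<close> runs through all finite rational sequences, each one infinitely often,
  and is supported in \<open>{..k}\<close>.\<close>
definition rational_targets :: "nat \<Rightarrow> nat \<Rightarrow> complex" where
  "rational_targets k j =
     (if j \<le> k then seq_of_rat_list (fst (from_nat k :: (rat \<times> rat) list \<times> nat)) j else 0)"

lemma seq_of_rat_list_support: "n \<ge> length l \<Longrightarrow> seq_of_rat_list l n = 0"
  by (simp add: seq_of_rat_list_def)

lemma lp_seq_of_rat_list: "r > 0 \<Longrightarrow> lp r (seq_of_rat_list l)"
  by (rule lp_finite_support[OF seq_of_rat_list_support])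

lemma rational_targets_support: "k < j \<Longrightarrow> rational_targets k j = 0"
  by (simp add: rational_targets_def)

lemma rational_targets_eq:
  obtains k where "k \<ge> M" "rational_targets k = seq_of_rat_list l"
proof -
  have "range (\<lambda>i::nat. to_nat (l, i)) \<subseteq> {k. fst (from_nat k :: (rat \<times> rat) list \<times> nat) = l}"
    by (auto simp: from_nat_to_nat)
  moreover have "infinite (range (\<lambda>i::nat. to_nat (l, i)))"
    by (rule range_inj_infinite) (auto simp: inj_def)
  ultimately have "infinite {k. fst (from_nat k :: (rat \<times> rat) list \<times> nat) = l}"
    using infinite_super by blast
  then obtain k where k: "k \<ge> max M (length l)" "fst (from_nat k :: (rat \<times> rat) list \<times> nat) = l"
    unfolding infinite_nat_iff_unbounded_le by blast
  have "rational_targets k = seq_of_rat_list l"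
    using k by (auto simp: rational_targets_def seq_of_rat_list_def)
  with k show ?thesis using that by auto
qed

lemma rat_pair_approx:
  assumes "\<tau> > 0"
  shows "\<exists>r. cmod (z - complex_of_rat_pair r) < \<tau>"
proof -
  obtain x where x: "x \<in> \<rat>" "Re z - \<tau>/2 < x" "x < Re z + \<tau>/2"
    using Rats_dense_in_real[of "Re z - \<tau>/2" "Re z + \<tau>/2"] assms by auto
  obtain y where y: "y \<in> \<rat>" "Im z - \<tau>/2 < y" "y < Im z + \<tau>/2"
    using Rats_dense_in_real[of "Im z - \<tau>/2" "Im z + \<tau>/2"] assms by auto
  obtain rx ry where "x = of_rat rx" "y = of_rat ry" using x(1) y(1) Rats_cases by metis
  moreover have "cmod (z - Complex x y) \<le> \<bar>Re (z - Complex x y)\<bar> + \<bar>Im (z - Complex x y)\<bar>"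
    by (rule cmod_le)
  ultimately show ?thesis using x y
    by (intro exI[of _ "(rx, ry)"]) (simp add: complex_of_rat_pair_def)
qed

lemma rat_list_approx:
  assumes "\<tau> > 0"
  obtains l where "length l = N" "\<And>n. n < N \<Longrightarrow> cmod (s n - seq_of_rat_list l n) < \<tau>"
proof -
  define l where "l = map (\<lambda>n. SOME r. cmod (s n - complex_of_rat_pair r) < \<tau>) [0..<N]"
  have "cmod (s n - seq_of_rat_list l n) < \<tau>" if "n < N" for n
    using someI_ex[OF rat_pair_approx[OF assms, of "s n"]] that
    by (simp add: seq_of_rat_list_def l_def)
  then show ?thesis by (intro that[of l]) (auto simp: l_def)
qed

lemma taylor_coeff_eq_power_series:
  assumes "\<rho> > 0" "\<And>z. z \<in> ball 0 \<rho> \<Longrightarrow> (\<lambda>n. c n * z ^ n) sums f z"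
  shows "taylor_coeff f n = c n"
proof -
  define F where "F = Abs_fps c"
  have rad: "fps_conv_radius F \<ge> \<rho>"
    unfolding fps_conv_radius_def F_def
  proof (rule conv_radius_geI_ex')
    fix r :: real assume r: "0 < r" "ereal r < ereal \<rho>"
    have "of_real r \<in> ball (0::complex) \<rho>" using r by auto
    from assms(2)[OF this] show "summable (\<lambda>n. fps_nth (Abs_fps c) n * of_real r ^ n)"
      by (auto dest: sums_summable)
  qed
  have "eventually (\<lambda>z. z \<in> ball 0 \<rho>) (nhds (0::complex))"
    using assms(1) by (intro eventually_nhds_in_open) auto
  then have ev: "eventually (\<lambda>z. eval_fps F z = f z) (nhds 0)"
    by eventually_elim (auto simp: eval_fps_def F_def sums_unique[OF assms(2), symmetric])
  have "f has_fps_expansion F"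
    unfolding has_fps_expansion_def using rad assms(1) ev
    by (auto intro: less_le_trans[of 0 "ereal \<rho>"])
  from fps_nth_fps_expansion[OF this, of n] show ?thesis
    by (simp add: taylor_coeff_def F_def)
qed


section \<open>The space \<open>\<ell>\<^sup>p\<^sub>a\<^sub>,\<^sub>b\<close>\<close>

locale weighted_shift =
  fixes a b w :: "nat \<Rightarrow> complex" and p :: real
  assumes p_gt_1: "1 < p" and a_nonzero: "\<And>n. a n \<noteq> 0" and b_nonzero: "\<And>n. b n \<noteq> 0"
    and root_limsup_finite: "limsup (\<lambda>n. ereal ((cmod (a n) + cmod (b n)) powr (1 / real n))) < \<infinity>"
    and w_nonzero: "\<And>n. w n \<noteq> 0"
    and bweight_bounded: "bdd_above (range (\<lambda>n. cmod (w n * a n / a (Suc n))))"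
    and kappa_limsup: "limsup (\<lambda>n. ereal (cmod (b n / a (Suc n)))) < 1"
begin

lemma p_ge_1: "p \<ge> 1"
  using p_gt_1 by simp

abbreviation disc where "disc \<equiv> Rdisc a b"

definition kappa where "kappa n = b n / a (Suc n)"

definition bweight where "bweight n = w n * a n / a (Suc n)"

definition root_limsup where
  "root_limsup = real_of_ereal (limsup (\<lambda>n. ereal ((cmod (a n) + cmod (b n)) powr (1 / real n))))"

lemma root_limsup:
  "root_limsup \<ge> 0"
  "limsup (\<lambda>n. ereal ((cmod (a n) + cmod (b n)) powr (1 / real n))) = ereal root_limsup"
proof -
  let ?L = "limsup (\<lambda>n. ereal ((cmod (a n) + cmod (b n)) powr (1 / real n)))"
  have "0 \<le> ?L" by (intro le_Limsup) auto
  moreover from this have "?L \<noteq> \<infinity>" "?L \<noteq> -\<infinity>" using root_limsup_finite by auto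
  ultimately obtain l where "?L = ereal l" "l \<ge> 0" by (cases ?L) auto
  then show "root_limsup \<ge> 0" "?L = ereal root_limsup" by (auto simp: root_limsup_def)
qed

lemma disc_eq: "disc = {z. cmod z * root_limsup < 1}"
  unfolding Rdisc_def root_limsup(2) by auto

lemma ball_subset_disc: "ball 0 (1 / (root_limsup + 1)) \<subseteq> disc"
proof
  fix z :: complex assume "z \<in> ball 0 (1 / (root_limsup + 1))"
  then have "cmod z * (root_limsup + 1) < 1" using root_limsup(1) by (simp add: field_simps)
  moreover have "cmod z * root_limsup \<le> cmod z * (root_limsup + 1)" by (simp add: mult_left_mono)
  ultimately show "z \<in> disc" by (simp add: disc_eq)
qed

lemma summable_ab_disc:
  assumes z: "z \<in> disc"
  shows "summable (\<lambda>n. (cmod (a n) + cmod (b n)) * cmod z ^ n)"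
proof (rule root_test_convergence')
  let ?f = "\<lambda>n. (cmod (a n) + cmod (b n)) * cmod z ^ n"
  have ev: "eventually (\<lambda>n. ereal (root n (norm (?f n))) =
      ereal (cmod z) * ereal ((cmod (a n) + cmod (b n)) powr (1 / real n))) sequentially"
    using eventually_gt_at_top[of 0]
  proof eventually_elim
    case (elim n)
    have pos: "cmod (a n) + cmod (b n) \<ge> 0" by simp
    have "root n (norm (?f n)) = root n (cmod (a n) + cmod (b n)) * root n (cmod z ^ n)"
      by (simp add: real_root_mult abs_mult)
    also have "root n (cmod z ^ n) = cmod z" using elim by (simp add: real_root_pos2)
    also have "root n (cmod (a n) + cmod (b n)) = (cmod (a n) + cmod (b n)) powr (1 / real n)"
      using elim pos by (simp add: root_powr_inverse)
    finally show ?case by (simp add: mult.commute)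
  qed
  have "limsup (\<lambda>n. ereal (root n (norm (?f n)))) =
        limsup (\<lambda>n. ereal (cmod z) * ereal ((cmod (a n) + cmod (b n)) powr (1 / real n)))"
    by (rule Limsup_eq[OF ev])
  also have "\<dots> = ereal (cmod z) * ereal root_limsup"
    by (subst limsup_ereal_mult_left) (auto simp: root_limsup(2))
  also have "\<dots> < 1" using z by (simp add: disc_eq)
  finally show "limsup (\<lambda>n. ereal (root n (norm (?f n)))) < 1" .
qed

lemma summable_a_disc: "z \<in> disc \<Longrightarrow> summable (\<lambda>n. cmod (a n) * cmod z ^ n)"
  by (rule summable_comparison_test'[OF summable_ab_disc, of z 0]) (auto simp: mult_right_mono)

lemma summable_b_disc: "z \<in> disc \<Longrightarrow> summable (\<lambda>n. cmod (b n) * cmod z ^ n)"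
  by (rule summable_comparison_test'[OF summable_ab_disc, of z 0]) (auto simp: mult_right_mono)

definition taylor_of :: "(nat \<Rightarrow> complex) \<Rightarrow> nat \<Rightarrow> complex" where
  "taylor_of lam n = lam n * a n + (case n of 0 \<Rightarrow> 0 | Suc m \<Rightarrow> lam m * b m)"

definition basis :: "nat \<Rightarrow> cfun" where
  "basis n = (\<lambda>z. if z \<in> disc then fab a b n z else 0)"

lemma fab_series_eq_taylor:
  assumes B: "\<And>n. cmod (lam n) \<le> B" and z: "z \<in> disc"
  shows "(\<lambda>n. lam n * fab a b n z) sums (\<Sum>n. taylor_of lam n * z ^ n)"
    and "summable (\<lambda>n. taylor_of lam n * z ^ n)"
proof -
  define A where "A n = lam n * a n * z ^ n" for n
  define Bt where "Bt n = lam n * b n * z ^ Suc n" for n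
  define Bt' where "Bt' n = (case n of 0 \<Rightarrow> 0 | Suc m \<Rightarrow> Bt m)" for n
  have B0: "B \<ge> 0" using B[of 0] by (meson norm_ge_zero order.trans)
  have sA: "summable A"
  proof (rule summable_comparison_test'[of "\<lambda>n. B * (cmod (a n) * cmod z ^ n)" 0])
    show "summable (\<lambda>n. B * (cmod (a n) * cmod z ^ n))" using summable_a_disc[OF z]
      by (rule summable_mult)
    fix n have "norm (A n) = cmod (lam n) * (cmod (a n) * cmod z ^ n)"
      unfolding A_def by (simp add: norm_mult norm_power mult_ac)
    also have "\<dots> \<le> B * (cmod (a n) * cmod z ^ n)" by (rule mult_right_mono[OF B]) simp
    finally show "norm (A n) \<le> B * (cmod (a n) * cmod z ^ n)" .
  qed
  have sB: "summable Bt"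
  proof (rule summable_comparison_test'[of "\<lambda>n. (B * cmod z) * (cmod (b n) * cmod z ^ n)" 0])
    show "summable (\<lambda>n. (B * cmod z) * (cmod (b n) * cmod z ^ n))" using summable_b_disc[OF z]
      by (rule summable_mult)
    fix n have "norm (Bt n) = cmod (lam n) * (cmod (b n) * cmod z ^ n * cmod z)"
      unfolding Bt_def by (simp add: norm_mult norm_power mult_ac)
    also have "\<dots> \<le> B * (cmod (b n) * cmod z ^ n * cmod z)" by (rule mult_right_mono[OF B]) simp
    finally show "norm (Bt n) \<le> (B * cmod z) * (cmod (b n) * cmod z ^ n)" by (simp add: mult_ac)
  qed
  have sB': "Bt' sums suminf Bt"
  proof -
    have "(\<lambda>n. Bt' (Suc n)) sums suminf Bt" using sB by (simp add: Bt'_def summable_sums)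
    then show ?thesis by (subst (asm) sums_Suc_iff) (simp add: Bt'_def)
  qed
  have eq1: "(\<lambda>n. lam n * fab a b n z) = (\<lambda>n. A n + Bt n)"
    by (auto simp: fab_def A_def Bt_def algebra_simps)
  have eq2: "(\<lambda>n. taylor_of lam n * z ^ n) = (\<lambda>n. A n + Bt' n)"
    by (auto simp: taylor_of_def A_def Bt'_def Bt_def algebra_simps split: nat.split)
  have s1: "(\<lambda>n. lam n * fab a b n z) sums (suminf A + suminf Bt)"
    unfolding eq1 using sA sB by (intro sums_add) (auto simp: summable_sums)
  have s2: "(\<lambda>n. taylor_of lam n * z ^ n) sums (suminf A + suminf Bt)"
    unfolding eq2 using sA sB' by (intro sums_add) (auto simp: summable_sums)
  show "summable (\<lambda>n. taylor_of lam n * z ^ n)" using s2 by (rule sums_summable)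
  show "(\<lambda>n. lam n * fab a b n z) sums (\<Sum>n. taylor_of lam n * z ^ n)"
    using s1 s2 by (simp add: sums_unique[OF s2, symmetric])
qed
lemma represents_lp: "represents a b p lam f \<Longrightarrow> lp p lam"
  by (simp add: represents_def lp_def)

lemma represents_bounded: "represents a b p lam f \<Longrightarrow> cmod (lam n) \<le> lpsum p lam powr (1/p)"
  using norm_le_lpsum_powr[OF represents_lp] p_gt_1 by auto

lemma represents_taylor_series: assumes "represents a b p lam f" "z \<in> disc"
  shows "(\<lambda>n. taylor_of lam n * z ^ n) sums f z"
proof -
  have s1: "(\<lambda>n. lam n * fab a b n z) sums f z" using assms by (auto simp: represents_def)
  have s2: "(\<lambda>n. lam n * fab a b n z) sums (\<Sum>n. taylor_of lam n * z ^ n)"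
    "summable (\<lambda>n. taylor_of lam n * z ^ n)"
    using fab_series_eq_taylor[OF represents_bounded[OF assms(1)] assms(2)] by auto
  from sums_unique2[OF s1 s2(1)] s2(2) show ?thesis by (simp add: summable_sums)
qed

lemma represents_taylor_coeff: "represents a b p lam f \<Longrightarrow> taylor_coeff f n = taylor_of lam n"
  by (rule taylor_coeff_eq_power_series[of "1 / (root_limsup + 1)"])
     (use root_limsup(1) represents_taylor_series ball_subset_disc in auto)

lemma taylor_of_inj: assumes "\<And>n. taylor_of x n = taylor_of y n" shows "x = y"
proof
  fix n show "x n = y n"
  proof (induction n)
    case 0 then show ?case using assms[of 0] a_nonzero[of 0] by (simp add: taylor_of_def)
  next
    case (Suc n) then show ?case using assms[of "Suc n"] a_nonzero[of "Suc n"]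
      by (simp add: taylor_of_def)
  qed
qed

lemma coefs_eq: assumes "represents a b p lam f" shows "coefs a b p f = lam"
  unfolding coefs_def
proof (rule the_equality)
  show "represents a b p lam f" by (rule assms)
  fix lam' assume "represents a b p lam' f"
  then show "lam' = lam" using represents_taylor_coeff assms by (intro taylor_of_inj) metis
qed

lemma lpab_norm_eq: "represents a b p lam f \<Longrightarrow> lpab_norm a b p f = lpsum p lam powr (1/p)"
  by (simp add: lpab_norm_def coefs_eq lpsum_def)

lemma lpab_represents: "f \<in> lpab a b p \<Longrightarrow> represents a b p (coefs a b p f) f"
  unfolding lpab_def using coefs_eq by auto

lemma represents_add:
  assumes "represents a b p x f" "represents a b p y g"
  shows "represents a b p (\<lambda>n. x n + y n) (\<lambda>z. f z + g z)"
  using assms lp_add(1)[OF represents_lp represents_lp p_ge_1, OF assms]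
  unfolding represents_def lp_def by (auto simp: distrib_right intro: sums_add)

lemma represents_scale: assumes "represents a b p x f"
  shows "represents a b p (\<lambda>n. c * x n) (\<lambda>z. c * f z)"
  using assms lp_scale[OF represents_lp, OF assms] unfolding represents_def lp_def
  by (auto simp: mult.assoc intro: sums_mult)

lemma represents_zero: "represents a b p (\<lambda>n. 0) (\<lambda>z. 0)"
  unfolding represents_def by auto

lemma represents_basis: "represents a b p (\<lambda>k. if k = n then 1 else 0) (basis n)"
  unfolding represents_def basis_def
proof (intro conjI ballI allI impI)
  show "summable (\<lambda>k. cmod (if k = n then 1 else 0::complex) powr p)"
    by (rule summable_finite[of "{n}"]) auto
  fix z assume "z \<in> disc"
  have "(\<lambda>k. (if k = n then 1 else 0) * fab a b k z) = (\<lambda>k. if k = n then fab a b n z else 0)"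
    by auto
  then show "(\<lambda>k. (if k = n then 1 else 0) * fab a b k z) sums (if z \<in> disc then fab a b n z else 0)"
    using \<open>z \<in> disc\<close> sums_single[of n "\<lambda>_. fab a b n z"] by simp
qed auto


lemma kappa_eventually_le:
  obtains s N where "s < 1" "\<And>n. n \<ge> N \<Longrightarrow> cmod (kappa n) \<le> s"
proof -
  obtain y :: ereal where y: "limsup (\<lambda>n. ereal (cmod (kappa n))) < y" "y < 1"
    using kappa_limsup dense unfolding kappa_def by blast
  then have "eventually (\<lambda>n. ereal (cmod (kappa n)) < y) sequentially"
    by (intro Limsup_lessD)
  then obtain N where N: "\<And>n. n \<ge> N \<Longrightarrow> ereal (cmod (kappa n)) < y"
    by (auto simp: eventually_sequentially)
  have "ereal 0 < y" by (rule order.strict_trans1[OF _ N[OF order.refl]]) simp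
  then have "y > 0" by (simp add: zero_ereal_def)
  then obtain s where "y = ereal s" using y(2) by (cases y) auto
  with N y(2) show ?thesis by (intro that[of s N]) (auto intro: less_imp_le)
qed

lemma kappa_bounded: "bdd_above (range (\<lambda>n. cmod (kappa n)))"
proof -
  obtain s N where s: "\<And>n. n \<ge> N \<Longrightarrow> cmod (kappa n) \<le> s" using kappa_eventually_le by blast
  have "cmod (kappa n) \<le> max s (\<Sum>k<N. cmod (kappa k))" for n
  proof (cases "n < N")
    case True
    then have "cmod (kappa n) \<le> (\<Sum>k<N. cmod (kappa k))" by (intro member_le_sum) auto
    then show ?thesis by simp
  qed (use s[of n] in \<open>auto simp: not_less\<close>)
  then show ?thesis by (intro bdd_aboveI) auto
qed

definition kappa_max where "kappa_max = max 1 (SUP n. cmod (kappa n))"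

definition bweight_max where "bweight_max = max 1 (SUP n. cmod (bweight n))"

lemma kappa_max: "cmod (kappa n) \<le> kappa_max" "kappa_max \<ge> 1"
  using cSUP_upper[OF _ kappa_bounded, of n] by (auto simp: kappa_max_def)

lemma bweight_max: "cmod (bweight n) \<le> bweight_max" "bweight_max \<ge> 1"
  using cSUP_upper[OF _ bweight_bounded, of n] by (auto simp: bweight_max_def bweight_def)

lemma bweight_nonzero: "bweight n \<noteq> 0"
  using a_nonzero w_nonzero by (simp add: bweight_def)

primrec solve_coefs :: "(nat \<Rightarrow> complex) \<Rightarrow> nat \<Rightarrow> complex" where
  "solve_coefs \<rho> 0 = \<rho> 0"
| "solve_coefs \<rho> (Suc n) = \<rho> (Suc n) - kappa n * solve_coefs \<rho> n"

lemma taylor_of_solve_coefs: "taylor_of (solve_coefs \<rho>) n = a n * \<rho> n"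
  using a_nonzero by (cases n) (auto simp: taylor_of_def kappa_def field_simps)

definition solve_bound where
  "solve_bound = (SOME C. C > 0 \<and>
     (\<forall>\<rho>. lp p \<rho> \<longrightarrow> lp p (solve_coefs \<rho>) \<and> lpsum p (solve_coefs \<rho>) \<le> C * lpsum p \<rho>))"

lemma solve_bound_exists:
  "\<exists>C. C > 0 \<and> (\<forall>\<rho>. lp p \<rho> \<longrightarrow> lp p (solve_coefs \<rho>) \<and> lpsum p (solve_coefs \<rho>) \<le> C * lpsum p \<rho>)"
proof -
  obtain s N where "s < 1" "\<And>n. n \<ge> N \<Longrightarrow> cmod (kappa n) \<le> s"
    using kappa_eventually_le by blast
  then obtain C where "C > 0"
    and "\<And>\<rho> x. lp p \<rho> \<Longrightarrow> x 0 = \<rho> 0 \<Longrightarrow> (\<And>n. x (Suc n) = \<rho> (Suc n) - kappa n * x n) \<Longrightarrow>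
           lp p x \<and> lpsum p x \<le> C * lpsum p \<rho>"
    using lp_contracting_recursion[OF p_ge_1] by metis
  then show ?thesis by (intro exI[of _ C]) auto
qed

lemma solve_bound_pos: "solve_bound > 0"
  and lp_solve_coefs: "lp p \<rho> \<Longrightarrow> lp p (solve_coefs \<rho>)"
    "lp p \<rho> \<Longrightarrow> lpsum p (solve_coefs \<rho>) \<le> solve_bound * lpsum p \<rho>"
  using someI_ex[OF solve_bound_exists] unfolding solve_bound_def[symmetric] by auto

lemma represents_solve_coefs:
  assumes s: "\<And>z. z \<in> disc \<Longrightarrow> (\<lambda>n. c n * z ^ n) sums h z"
    and z: "\<And>z. z \<notin> disc \<Longrightarrow> h z = 0" and l: "lp p (\<lambda>n. c n / a n)"
  shows "represents a b p (solve_coefs (\<lambda>n. c n / a n)) h"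
proof -
  let ?l = "solve_coefs (\<lambda>n. c n / a n)"
  have lp: "lp p ?l" by (rule lp_solve_coefs(1)[OF l])
  have taylor: "taylor_of ?l n = c n" for n using a_nonzero by (simp add: taylor_of_solve_coefs)
  have "(\<lambda>n. ?l n * fab a b n z) sums h z" if "z \<in> disc" for z
  proof -
    have "(\<lambda>n. ?l n * fab a b n z) sums (\<Sum>n. taylor_of ?l n * z ^ n)"
      using fab_series_eq_taylor(1)[OF norm_le_lpsum_powr[OF lp] that] p_gt_1 by auto
    also have "(\<Sum>n. taylor_of ?l n * z ^ n) = h z" using sums_unique[OF s[OF that]]
      by (simp add: taylor)
    finally show ?thesis .
  qed
  then show ?thesis using lp z unfolding represents_def lp_def by auto
qed

definition monomial :: "nat \<Rightarrow> cfun" where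
  "monomial m = (\<lambda>z. if z \<in> disc then z ^ m else 0)"

definition monomial_coefs :: "nat \<Rightarrow> nat \<Rightarrow> complex" where
  "monomial_coefs m = solve_coefs (\<lambda>n. (if n = m then 1 else 0) / a n)"

lemma represents_monomial: "represents a b p (monomial_coefs m) (monomial m)"
  unfolding monomial_coefs_def
proof (rule represents_solve_coefs)
  fix z assume "z \<in> disc"
  have "(\<lambda>n. (if n = m then 1 else 0) * z ^ n) = (\<lambda>n. if n = m then z ^ m else 0)" by auto
  then show "(\<lambda>n. (if n = m then 1 else 0) * z ^ n) sums monomial m z"
    using \<open>z \<in> disc\<close> sums_single[of m "\<lambda>_. z ^ m"] by (simp add: monomial_def)
next
  show "lp p (\<lambda>n. (if n = m then 1 else 0) / a n)" unfolding lp_def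
    by (rule summable_finite[of "{m}"]) auto
qed (auto simp: monomial_def)

lemma lpsum_monomial_coefs_le: "cmod (a m) powr p * lpsum p (monomial_coefs m) \<le> solve_bound"
proof -
  let ?d = "\<lambda>n. (if n = m then 1 else 0) / a n"
  have l: "lp p ?d" unfolding lp_def by (rule summable_finite[of "{m}"]) auto
  have "lpsum p ?d = (\<Sum>n. if n = m then cmod (1 / a m) powr p else 0)"
    unfolding lpsum_def by (intro suminf_cong) (auto simp: p_gt_1)
  also have "\<dots> = cmod (1 / a m) powr p" using sums_single[of m "\<lambda>_. cmod (1 / a m) powr p"]
    by (simp add: sums_iff)
  finally have e: "lpsum p ?d = cmod (1 / a m) powr p" .
  have "lpsum p (monomial_coefs m) \<le> solve_bound * cmod (1 / a m) powr p"
    using lp_solve_coefs(2)[OF l] unfolding monomial_coefs_def e .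
  then have "cmod (a m) powr p * lpsum p (monomial_coefs m) \<le> cmod (a m) powr p * (solve_bound * cmod (1 / a m) powr p)"
    by (intro mult_left_mono) auto
  also have "\<dots> = solve_bound"
    using a_nonzero[of m] by (simp add: norm_divide powr_divide powr_mult[symmetric])
  finally show ?thesis .
qed


definition Fw_seq :: "(nat \<Rightarrow> complex) \<Rightarrow> nat \<Rightarrow> complex" where
  "Fw_seq x = shift_right (\<lambda>n. bweight n * (x n + shift_right (\<lambda>k. kappa k * x k) n))"

lemma Fw_seq_Suc: "Fw_seq x (Suc n) = w n * taylor_of x n / a (Suc n)"
  using a_nonzero
  by (cases n) (auto simp: Fw_seq_def shift_right_def taylor_of_def bweight_def kappa_def field_simps)

lemma Fw_seq_0: "Fw_seq x 0 = 0" by (simp add: Fw_seq_def shift_right_def)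

definition Fw_bound where "Fw_bound = solve_bound * bweight_max powr p * 2 powr (p - 1) * (1 + kappa_max powr p)"

lemma lp_Fw_seq:
  assumes "lp p x"
  shows "lp p (Fw_seq x)" "lpsum p (Fw_seq x) \<le> (Fw_bound / solve_bound) * lpsum p x"
proof -
  have pp: "p > 0" using p_gt_1 by simp
  have l1: "lp p (\<lambda>k. kappa k * x k)" "lpsum p (\<lambda>k. kappa k * x k) \<le> kappa_max powr p * lpsum p x"
    using lp_mult_bounded[OF assms pp kappa_max(1)] by auto
  have l2: "lp p (shift_right (\<lambda>k. kappa k * x k))" "lpsum p (shift_right (\<lambda>k. kappa k * x k)) \<le> kappa_max powr p * lpsum p x"
    using lp_shift_right[OF l1(1) pp] l1(2) by auto
  have l3: "lp p (\<lambda>n. x n + shift_right (\<lambda>k. kappa k * x k) n)"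
    using lp_add(1)[OF assms l2(1) p_ge_1] .
  have n3: "lpsum p (\<lambda>n. x n + shift_right (\<lambda>k. kappa k * x k) n) \<le> 2 powr (p - 1) * (1 + kappa_max powr p) * lpsum p x"
  proof -
    have "lpsum p (\<lambda>n. x n + shift_right (\<lambda>k. kappa k * x k) n) \<le> 2 powr (p - 1) * (lpsum p x + lpsum p (shift_right (\<lambda>k. kappa k * x k)))"
      by (rule lp_add(2)[OF assms l2(1) p_ge_1])
    also have "\<dots> \<le> 2 powr (p - 1) * (lpsum p x + kappa_max powr p * lpsum p x)"
      using l2(2) by (intro mult_left_mono add_left_mono) auto
    finally show ?thesis by (simp add: algebra_simps)
  qed
  have l4: "lp p (\<lambda>n. bweight n * (x n + shift_right (\<lambda>k. kappa k * x k) n))"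
    "lpsum p (\<lambda>n. bweight n * (x n + shift_right (\<lambda>k. kappa k * x k) n)) \<le> bweight_max powr p * lpsum p (\<lambda>n. x n + shift_right (\<lambda>k. kappa k * x k) n)"
    using lp_mult_bounded[OF l3 pp bweight_max(1)] by auto
  show "lp p (Fw_seq x)" unfolding Fw_seq_def using lp_shift_right(1)[OF l4(1) pp] .
  have "lpsum p (Fw_seq x) \<le> bweight_max powr p * (2 powr (p - 1) * (1 + kappa_max powr p) * lpsum p x)"
    unfolding Fw_seq_def lp_shift_right(2)[OF l4(1) pp] using l4(2) n3
    by (meson order.trans mult_left_mono powr_ge_zero)
  also have "\<dots> = (Fw_bound / solve_bound) * lpsum p x" using solve_bound_pos
    by (simp add: Fw_bound_def)
  finally show "lpsum p (Fw_seq x) \<le> (Fw_bound / solve_bound) * lpsum p x" .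
qed

lemma Fw_seq_bounded:
  assumes "\<And>n. cmod (x n) \<le> B"
  shows "cmod (Fw_seq x n) \<le> bweight_max * (1 + kappa_max) * B"
proof -
  have B0: "B \<ge> 0" using assms[of 0] by (meson norm_ge_zero order.trans)
  have shifted: "cmod (shift_right (\<lambda>k. kappa k * x k) n) \<le> kappa_max * B" for n
    using kappa_max(2) B0
    by (cases n) (auto simp: shift_right_def norm_mult intro: mult_mono kappa_max(1) assms)
  have "cmod (bweight m * (x m + shift_right (\<lambda>k. kappa k * x k) m)) \<le> bweight_max * (B + kappa_max * B)" for m
    unfolding norm_mult using bweight_max assms[of m] shifted[of m] 
    by (intro mult_mono) (auto intro: order.trans[OF norm_triangle_ineq] add_mono)
  then show ?thesis using bweight_max(2) B0 kappa_max(2)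
    by (cases n) (auto simp: Fw_seq_def shift_right_def algebra_simps)
qed

lemma Fw_summable: assumes "represents a b p x g" "z \<in> disc"
  shows "summable (\<lambda>n. taylor_of x n * w n * z ^ Suc n)"
proof -
  define B where "B = lpsum p x powr (1/p)"
  have xb: "cmod (x n) \<le> B" for n using represents_bounded[OF assms(1)] by (simp add: B_def)
  have e: "taylor_of x n * w n = a (Suc n) * Fw_seq x (Suc n)" for n using a_nonzero
    by (simp add: Fw_seq_Suc)
  have sa: "summable (\<lambda>n. cmod (a (Suc n)) * cmod z ^ Suc n)"
    using summable_a_disc[OF assms(2)] by (subst summable_Suc_iff)
  show ?thesis
  proof (rule summable_comparison_test'[of "\<lambda>n. (bweight_max * (1 + kappa_max) * B) * (cmod (a (Suc n)) * cmod z ^ Suc n)" 0])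
    show "summable (\<lambda>n. (bweight_max * (1 + kappa_max) * B) * (cmod (a (Suc n)) * cmod z ^ Suc n))"
      using sa by (rule summable_mult)
    fix n
    have "norm (taylor_of x n * w n * z ^ Suc n) = cmod (taylor_of x n * w n) * cmod (z ^ Suc n)"
      by (simp only: norm_mult)
    also have "\<dots> = cmod (Fw_seq x (Suc n)) * (cmod (a (Suc n)) * cmod z ^ Suc n)"
      unfolding e by (simp add: norm_mult norm_power mult_ac)
    also have "\<dots> \<le> (bweight_max * (1 + kappa_max) * B) * (cmod (a (Suc n)) * cmod z ^ Suc n)"
      by (intro mult_right_mono Fw_seq_bounded xb) auto
    finally show "norm (taylor_of x n * w n * z ^ Suc n) \<le> (bweight_max * (1 + kappa_max) * B) * (cmod (a (Suc n)) * cmod z ^ Suc n)" .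
  qed
qed

lemma Fw_eq_series: assumes "represents a b p x g" "z \<in> disc"
  shows "Fw a b w g z = (\<Sum>n. taylor_of x n * w n * z ^ Suc n)"
  using assms by (simp add: Fw_def represents_taylor_coeff)

lemma represents_Fw: assumes "represents a b p x g"
  shows "represents a b p (solve_coefs (Fw_seq x)) (Fw a b w g)"
proof -
  define c where "c n = (case n of 0 \<Rightarrow> 0 | Suc k \<Rightarrow> w k * taylor_of x k)" for n
  have ca: "(\<lambda>n. c n / a n) = Fw_seq x"
    using a_nonzero by (auto simp: c_def Fw_seq_0 Fw_seq_Suc split: nat.split)
  have "represents a b p (solve_coefs (\<lambda>n. c n / a n)) (Fw a b w g)"
  proof (rule represents_solve_coefs)
    fix z assume z: "z \<in> disc"
    have "(\<lambda>n. taylor_of x n * w n * z ^ Suc n) sums Fw a b w g z"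
      using Fw_summable[OF assms z] Fw_eq_series[OF assms z] by (simp add: summable_sums)
    moreover have "(\<lambda>n. c (Suc n) * z ^ Suc n) = (\<lambda>n. taylor_of x n * w n * z ^ Suc n)"
      by (auto simp: c_def)
    ultimately have "(\<lambda>n. c (Suc n) * z ^ Suc n) sums Fw a b w g z" by simp
    then show "(\<lambda>n. c n * z ^ n) sums Fw a b w g z"
      by (subst (asm) sums_Suc_iff) (simp add: c_def)
  next
    show "lp p (\<lambda>n. c n / a n)" unfolding ca using lp_Fw_seq(1)[OF represents_lp[OF assms]] .
  qed (simp add: Fw_def)
  then show ?thesis unfolding ca .
qed

lemma Fw_in_lpab: "g \<in> lpab a b p \<Longrightarrow> Fw a b w g \<in> lpab a b p"
  using represents_Fw[OF lpab_represents] unfolding lpab_def by blast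

lemma coefs_Fw: "represents a b p x g \<Longrightarrow> coefs a b p (Fw a b w g) = solve_coefs (Fw_seq x)"
  by (rule coefs_eq[OF represents_Fw])

lemma lpsum_coefs_Fw_le: assumes "represents a b p x g"
  shows "lpsum p (coefs a b p (Fw a b w g)) \<le> Fw_bound * lpsum p x"
proof -
  have "lpsum p (solve_coefs (Fw_seq x)) \<le> solve_bound * lpsum p (Fw_seq x)"
    using lp_solve_coefs(2)[OF lp_Fw_seq(1)[OF represents_lp[OF assms]]] .
  also have "\<dots> \<le> solve_bound * ((Fw_bound / solve_bound) * lpsum p x)"
    using lp_Fw_seq(2)[OF represents_lp[OF assms]] solve_bound_pos by (intro mult_left_mono) auto
  also have "\<dots> = Fw_bound * lpsum p x" using solve_bound_pos by simp
  finally show ?thesis using coefs_Fw[OF assms] by simp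
qed

lemma taylor_coeff_Fw_Suc: assumes "represents a b p x g"
  shows "taylor_coeff (Fw a b w g) (Suc n) = w n * taylor_coeff g n"
  using represents_taylor_coeff[OF represents_Fw[OF assms]] represents_taylor_coeff[OF assms] a_nonzero
  by (simp add: taylor_of_solve_coefs Fw_seq_Suc)

lemma taylor_coeff_Fw_0: assumes "represents a b p x g"
  shows "taylor_coeff (Fw a b w g) 0 = 0"
  using represents_taylor_coeff[OF represents_Fw[OF assms]]
  by (simp add: taylor_of_solve_coefs Fw_seq_0)


lemma lpab_add: "f \<in> lpab a b p \<Longrightarrow> g \<in> lpab a b p \<Longrightarrow> (\<lambda>z. f z + g z) \<in> lpab a b p"
  using represents_add[OF lpab_represents lpab_represents] unfolding lpab_def by blast

lemma lpab_scale: "f \<in> lpab a b p \<Longrightarrow> (\<lambda>z. c * f z) \<in> lpab a b p"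
  using represents_scale[OF lpab_represents] unfolding lpab_def by blast

lemma lpab_zero: "(\<lambda>z. 0) \<in> lpab a b p"
  using represents_zero unfolding lpab_def by blast

lemma lpab_diff: "f \<in> lpab a b p \<Longrightarrow> g \<in> lpab a b p \<Longrightarrow> (\<lambda>z. f z - g z) \<in> lpab a b p"
  using lpab_add[OF _ lpab_scale[of g "-1"]] by simp

lemma coefs_add: "f \<in> lpab a b p \<Longrightarrow> g \<in> lpab a b p \<Longrightarrow>
  coefs a b p (\<lambda>z. f z + g z) = (\<lambda>n. coefs a b p f n + coefs a b p g n)"
  by (rule coefs_eq[OF represents_add[OF lpab_represents lpab_represents]])

lemma coefs_scale: "f \<in> lpab a b p \<Longrightarrow> coefs a b p (\<lambda>z. c * f z) = (\<lambda>n. c * coefs a b p f n)"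
  by (rule coefs_eq[OF represents_scale[OF lpab_represents]])

lemma lpab_norm_nonneg: "f \<in> lpab a b p \<Longrightarrow> lpab_norm a b p f \<ge> 0"
  by (simp add: lpab_norm_def)

lemma lpab_norm_scale: assumes "f \<in> lpab a b p"
  shows "lpab_norm a b p (\<lambda>z. c * f z) = cmod c * lpab_norm a b p f"
proof -
  have l: "lp p (coefs a b p f)" using represents_lp[OF lpab_represents[OF assms]] .
  have "lpab_norm a b p (\<lambda>z. c * f z) = (cmod c powr p * lpsum p (coefs a b p f)) powr (1/p)"
    unfolding lpab_norm_def coefs_scale[OF assms] using lpsum_scale[OF l, of c] p_gt_1
    by (simp add: lpsum_def)
  also have "\<dots> = cmod c * lpsum p (coefs a b p f) powr (1/p)"
    using p_gt_1 lpsum_nonneg[OF l] by (simp add: powr_mult powr_powr)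
  finally show ?thesis by (simp add: lpab_norm_def lpsum_def)
qed

lemma lpab_norm_eq_0_imp: assumes "f \<in> lpab a b p" "lpab_norm a b p f = 0" shows "f = (\<lambda>z. 0)"
proof -
  have r: "represents a b p (coefs a b p f) f" by (rule lpab_represents[OF assms(1)])
  have l: "lp p (coefs a b p f)" by (rule represents_lp[OF r])
  have "lpsum p (coefs a b p f) = 0" using assms(2) lpsum_nonneg[OF l] p_gt_1
    by (simp add: lpab_norm_def lpsum_def[symmetric])
  then have z: "coefs a b p f n = 0" for n using lpsum_eq_0_imp[OF l] p_gt_1 by auto
  show ?thesis
  proof
    fix z show "f z = 0"
    proof (cases "z \<in> disc")
      case True
      then have "(\<lambda>n. coefs a b p f n * fab a b n z) sums f z" using r
        by (auto simp: represents_def)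
      then show ?thesis using z by (simp add: sums_0 sums_unique2[of "\<lambda>_. 0"])
    next
      case False then show ?thesis using r by (auto simp: represents_def)
    qed
  qed
qed

lemma lpab_norm_Fw_le: assumes "f \<in> lpab a b p"
  shows "lpab_norm a b p (Fw a b w f) \<le> Fw_bound powr (1/p) * lpab_norm a b p f"
proof -
  have r: "represents a b p (coefs a b p f) f" by (rule lpab_represents[OF assms])
  have l: "lp p (coefs a b p f)" by (rule represents_lp[OF r])
  have "lpab_norm a b p (Fw a b w f) = lpsum p (coefs a b p (Fw a b w f)) powr (1/p)"
    by (simp add: lpab_norm_def lpsum_def)
  also have "\<dots> \<le> (Fw_bound * lpsum p (coefs a b p f)) powr (1/p)"
    using lpsum_coefs_Fw_le[OF r] represents_lp[OF lpab_represents[OF Fw_in_lpab[OF assms]]] p_gt_1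
    by (intro powr_mono2) (auto intro: lpsum_nonneg)
  also have "\<dots> = Fw_bound powr (1/p) * lpab_norm a b p f"
    using lpsum_nonneg[OF l] by (simp add: powr_mult lpab_norm_def lpsum_def)
  finally show ?thesis .
qed

lemma taylor_coeff_add: "f \<in> lpab a b p \<Longrightarrow> g \<in> lpab a b p \<Longrightarrow>
    taylor_coeff (\<lambda>z. f z + g z) n = taylor_coeff f n + taylor_coeff g n"
  using represents_taylor_coeff[OF represents_add[OF lpab_represents lpab_represents]] represents_taylor_coeff[OF lpab_represents]
  by (simp add: taylor_of_def algebra_simps split: nat.split)

lemma taylor_coeff_scale: "f \<in> lpab a b p \<Longrightarrow> taylor_coeff (\<lambda>z. c * f z) n = c * taylor_coeff f n"
  using represents_taylor_coeff[OF represents_scale[OF lpab_represents]] represents_taylor_coeff[OF lpab_represents]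
  by (simp add: taylor_of_def algebra_simps split: nat.split)

lemma Fw_add: assumes "f \<in> lpab a b p" "g \<in> lpab a b p"
  shows "Fw a b w (\<lambda>z. f z + g z) = (\<lambda>z. Fw a b w f z + Fw a b w g z)"
proof
  fix z show "Fw a b w (\<lambda>z. f z + g z) z = Fw a b w f z + Fw a b w g z"
  proof (cases "z \<in> disc")
    case True
    have s1: "summable (\<lambda>n. taylor_coeff f n * w n * z ^ Suc n)"
      using Fw_summable[OF lpab_represents[OF assms(1)] True] represents_taylor_coeff[OF lpab_represents[OF assms(1)]]
      by simp
    have s2: "summable (\<lambda>n. taylor_coeff g n * w n * z ^ Suc n)"
      using Fw_summable[OF lpab_represents[OF assms(2)] True] represents_taylor_coeff[OF lpab_represents[OF assms(2)]]
      by simp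
    show ?thesis using True suminf_add[OF s1 s2]
      by (simp add: Fw_def taylor_coeff_add[OF assms] algebra_simps)
  qed (simp add: Fw_def)
qed

lemma Fw_scale: assumes "f \<in> lpab a b p"
  shows "Fw a b w (\<lambda>z. c * f z) = (\<lambda>z. c * Fw a b w f z)"
proof
  fix z show "Fw a b w (\<lambda>z. c * f z) z = c * Fw a b w f z"
  proof (cases "z \<in> disc")
    case True
    have s1: "summable (\<lambda>n. taylor_coeff f n * w n * z ^ Suc n)"
      using Fw_summable[OF lpab_represents[OF assms(1)] True] represents_taylor_coeff[OF lpab_represents[OF assms(1)]]
      by simp
    show ?thesis using True suminf_mult[OF s1, of c]
      by (simp add: Fw_def taylor_coeff_scale[OF assms] algebra_simps)
  qed (simp add: Fw_def)
qed



section \<open>The dual space\<close>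

definition bounded_functional :: "cfunctional \<Rightarrow> bool" where
  "bounded_functional \<phi> \<longleftrightarrow> (\<forall>f\<in>lpab a b p. \<forall>g\<in>lpab a b p. \<phi> (\<lambda>z. f z + g z) = \<phi> f + \<phi> g) \<and>
     (\<forall>c. \<forall>f\<in>lpab a b p. \<phi> (\<lambda>z. c * f z) = c * \<phi> f) \<and>
     (\<exists>C. \<forall>f\<in>lpab a b p. cmod (\<phi> f) \<le> C * lpab_norm a b p f)"

lemma dual_bounded_functional: "\<phi> \<in> dual a b p \<Longrightarrow> bounded_functional \<phi>"
  by (simp add: dual_def bounded_functional_def)

lemma dual_iff: "\<phi> \<in> dual a b p \<longleftrightarrow> bounded_functional \<phi> \<and> (\<forall>f. f \<notin> lpab a b p \<longrightarrow> \<phi> f = 0)"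
  by (simp add: dual_def bounded_functional_def)

lemma bounded_functionalI:
  assumes "\<And>f g. f \<in> lpab a b p \<Longrightarrow> g \<in> lpab a b p \<Longrightarrow> \<phi> (\<lambda>z. f z + g z) = \<phi> f + \<phi> g"
    "\<And>c f. f \<in> lpab a b p \<Longrightarrow> \<phi> (\<lambda>z. c * f z) = c * \<phi> f"
    "\<And>f. f \<in> lpab a b p \<Longrightarrow> cmod (\<phi> f) \<le> C * lpab_norm a b p f"
  shows "bounded_functional \<phi>"
  using assms unfolding bounded_functional_def by blast

lemma bounded_functional_add: "bounded_functional \<phi> \<Longrightarrow> f \<in> lpab a b p \<Longrightarrow> g \<in> lpab a b p \<Longrightarrow> \<phi> (\<lambda>z. f z + g z) = \<phi> f + \<phi> g"
  by (simp add: bounded_functional_def)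
lemma bounded_functional_scale: "bounded_functional \<phi> \<Longrightarrow> f \<in> lpab a b p \<Longrightarrow> \<phi> (\<lambda>z. c * f z) = c * \<phi> f"
  by (simp add: bounded_functional_def)

lemma bounded_functional_bound:
  assumes "bounded_functional \<phi>" obtains C where "C \<ge> 0" "\<And>f. f \<in> lpab a b p \<Longrightarrow> cmod (\<phi> f) \<le> C * lpab_norm a b p f"
proof -
  obtain C where C: "\<And>f. f \<in> lpab a b p \<Longrightarrow> cmod (\<phi> f) \<le> C * lpab_norm a b p f"
    using assms unfolding bounded_functional_def by blast
  have "cmod (\<phi> f) \<le> max C 0 * lpab_norm a b p f" if "f \<in> lpab a b p" for f
    using C[OF that] lpab_norm_nonneg[OF that] by (smt (verit) mult_right_mono)
  then show ?thesis using that[of "max C 0"] by auto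
qed

lemma bounded_functional_zero: "bounded_functional \<phi> \<Longrightarrow> \<phi> (\<lambda>z. 0) = 0"
  using bounded_functional_scale[OF _ lpab_zero, of \<phi> 0] by simp

lemma bounded_functional_diff: "bounded_functional \<phi> \<Longrightarrow> f \<in> lpab a b p \<Longrightarrow> g \<in> lpab a b p \<Longrightarrow> \<phi> (\<lambda>z. f z - g z) = \<phi> f - \<phi> g"
  using bounded_functional_add[OF _ _ lpab_scale[of g "-1"], of \<phi> f] bounded_functional_scale[of \<phi> g "-1"]
  by simp

definition dual_norm_set where "dual_norm_set \<phi> = {cmod (\<phi> f) | f. f \<in> lpab a b p \<and> lpab_norm a b p f \<le> 1}"

lemma dual_norm_eq_Sup: "dual_norm a b p \<phi> = Sup (dual_norm_set \<phi>)"
  by (simp add: dual_norm_def dual_norm_set_def)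

lemma dual_norm_set_nonempty: "dual_norm_set \<phi> \<noteq> {}"
  unfolding dual_norm_set_def using lpab_zero lpab_norm_eq[OF represents_zero] p_gt_1
  by (auto simp: lpsum_def)

lemma dual_norm_set_bdd: assumes "bounded_functional \<phi>" shows "bdd_above (dual_norm_set \<phi>)"
proof -
  obtain C where C: "C \<ge> 0" "\<And>f. f \<in> lpab a b p \<Longrightarrow> cmod (\<phi> f) \<le> C * lpab_norm a b p f"
    using bounded_functional_bound[OF assms] by blast
  have "x \<le> C" if "x \<in> dual_norm_set \<phi>" for x
    using that C unfolding dual_norm_set_def by (auto intro: order.trans mult_left_le)
  then show ?thesis by (auto simp: bdd_above_def)
qed

lemma dual_norm_le: assumes "C \<ge> 0" "\<And>f. f \<in> lpab a b p \<Longrightarrow> cmod (\<phi> f) \<le> C * lpab_norm a b p f"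
  shows "dual_norm a b p \<phi> \<le> C"
  unfolding dual_norm_eq_Sup
proof (rule cSup_least[OF dual_norm_set_nonempty])
  fix x assume "x \<in> dual_norm_set \<phi>"
  then show "x \<le> C" using assms unfolding dual_norm_set_def
    by (auto intro: order.trans mult_left_le)
qed

lemma dual_norm_nonneg: assumes "bounded_functional \<phi>" shows "dual_norm a b p \<phi> \<ge> 0"
proof -
  have "cmod (\<phi> (\<lambda>z. 0)) \<in> dual_norm_set \<phi>"
    unfolding dual_norm_set_def using lpab_zero lpab_norm_eq[OF represents_zero] p_gt_1
    by (auto simp: lpsum_def)
  then have "cmod (\<phi> (\<lambda>z. 0)) \<le> dual_norm a b p \<phi>"
    unfolding dual_norm_eq_Sup using dual_norm_set_bdd[OF assms] by (intro cSup_upper)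
  then show ?thesis by (meson norm_ge_zero order.trans)
qed

lemma dual_norm_bound: assumes "bounded_functional \<phi>" "f \<in> lpab a b p"
  shows "cmod (\<phi> f) \<le> dual_norm a b p \<phi> * lpab_norm a b p f"
proof (cases "lpab_norm a b p f = 0")
  case True
  then have "f = (\<lambda>z. 0)" using lpab_norm_eq_0_imp assms by blast
  then have "\<phi> f = 0" using bounded_functional_zero[OF assms(1)] by simp
  then show ?thesis using True by simp
next
  case False
  define N where "N = lpab_norm a b p f"
  have N: "N > 0" using False lpab_norm_nonneg[OF assms(2)] by (simp add: N_def)
  define g where "g = (\<lambda>z. complex_of_real (1 / N) * f z)"
  have g: "g \<in> lpab a b p" unfolding g_def using lpab_scale[OF assms(2)] .
  have gn: "lpab_norm a b p g = 1" unfolding g_def lpab_norm_scale[OF assms(2)] using N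
    by (simp add: N_def norm_divide)
  have "cmod (\<phi> g) \<in> dual_norm_set \<phi>" unfolding dual_norm_set_def using g gn by auto
  then have "cmod (\<phi> g) \<le> dual_norm a b p \<phi>"
    unfolding dual_norm_eq_Sup using dual_norm_set_bdd[OF assms(1)] by (intro cSup_upper)
  moreover have "cmod (\<phi> g) = cmod (\<phi> f) / N"
    unfolding g_def bounded_functional_scale[OF assms] using N by (simp add: norm_mult norm_divide)
  ultimately show ?thesis using N by (simp add: N_def divide_le_eq)
qed

lemma bounded_functional_lincomb:
  assumes "bounded_functional \<phi>" "bounded_functional \<psi>"
  shows "bounded_functional (\<lambda>f. \<phi> f + c * \<psi> f)"
proof -
  obtain C1 where C1: "C1 \<ge> 0" "\<And>f. f \<in> lpab a b p \<Longrightarrow> cmod (\<phi> f) \<le> C1 * lpab_norm a b p f"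
    using bounded_functional_bound[OF assms(1)] by blast
  obtain C2 where C2: "C2 \<ge> 0" "\<And>f. f \<in> lpab a b p \<Longrightarrow> cmod (\<psi> f) \<le> C2 * lpab_norm a b p f"
    using bounded_functional_bound[OF assms(2)] by blast
  show ?thesis
  proof (rule bounded_functionalI[where C = "C1 + cmod c * C2"])
    fix f assume f: "f \<in> lpab a b p"
    have "cmod (\<phi> f + c * \<psi> f) \<le> cmod (\<phi> f) + cmod c * cmod (\<psi> f)"
      by (metis norm_mult norm_triangle_ineq)
    also have "\<dots> \<le> C1 * lpab_norm a b p f + cmod c * (C2 * lpab_norm a b p f)"
      using C1(2)[OF f] C2(2)[OF f] by (intro add_mono mult_left_mono) auto
    finally show "cmod (\<phi> f + c * \<psi> f) \<le> (C1 + cmod c * C2) * lpab_norm a b p f"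
      by (simp add: algebra_simps)
  qed (use assms in \<open>auto simp: bounded_functional_add bounded_functional_scale algebra_simps\<close>)
qed

lemma bounded_functional_minus: "bounded_functional \<phi> \<Longrightarrow> bounded_functional \<psi> \<Longrightarrow> bounded_functional (\<lambda>f. \<phi> f - \<psi> f)"
  using bounded_functional_lincomb[of \<phi> \<psi> "-1"] by simp

lemma dual_norm_triangle:
  assumes "\<phi> \<in> dual a b p" "\<psi> \<in> dual a b p" "\<xi> \<in> dual a b p"
  shows "dual_norm a b p (\<lambda>f. \<phi> f - \<xi> f) \<le> dual_norm a b p (\<lambda>f. \<phi> f - \<psi> f) + dual_norm a b p (\<lambda>f. \<psi> f - \<xi> f)"
proof (rule dual_norm_le)
  note assms = dual_bounded_functional[OF assms(1)] dual_bounded_functional[OF assms(2)]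
    dual_bounded_functional[OF assms(3)]
  show "0 \<le> dual_norm a b p (\<lambda>f. \<phi> f - \<psi> f) + dual_norm a b p (\<lambda>f. \<psi> f - \<xi> f)"
    using dual_norm_nonneg bounded_functional_minus assms by (simp add: add_nonneg_nonneg)
  fix f assume f: "f \<in> lpab a b p"
  have "cmod (\<phi> f - \<xi> f) \<le> cmod (\<phi> f - \<psi> f) + cmod (\<psi> f - \<xi> f)"
    by (metis diff_add_cancel norm_triangle_ineq add_diff_eq)
  also have "\<dots> \<le> dual_norm a b p (\<lambda>f. \<phi> f - \<psi> f) * lpab_norm a b p f + dual_norm a b p (\<lambda>f. \<psi> f - \<xi> f) * lpab_norm a b p f"
    using dual_norm_bound[OF bounded_functional_minus[OF assms(1,2)] f] dual_norm_bound[OF bounded_functional_minus[OF assms(2,3)] f]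
    by (intro add_mono) auto
  finally show "cmod (\<phi> f - \<xi> f) \<le> (dual_norm a b p (\<lambda>f. \<phi> f - \<psi> f) + dual_norm a b p (\<lambda>f. \<psi> f - \<xi> f)) * lpab_norm a b p f"
    by (simp add: algebra_simps)
qed

lemma dual_lincomb: "\<phi> \<in> dual a b p \<Longrightarrow> \<psi> \<in> dual a b p \<Longrightarrow> (\<lambda>f. \<phi> f + c * \<psi> f) \<in> dual a b p"
  using bounded_functional_lincomb[OF dual_bounded_functional dual_bounded_functional]
  by (auto simp: dual_iff)

lemma dual_minus: "\<phi> \<in> dual a b p \<Longrightarrow> \<psi> \<in> dual a b p \<Longrightarrow> (\<lambda>f. \<phi> f - \<psi> f) \<in> dual a b p"
  using dual_lincomb[of \<phi> \<psi> "-1"] by simp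

lemma dual_norm_commute: "dual_norm a b p (\<lambda>f. \<phi> f - \<psi> f) = dual_norm a b p (\<lambda>f. \<psi> f - \<phi> f)"
  unfolding dual_norm_def by (simp add: norm_minus_commute)

lemma bounded_functional_Fw_adj:
  assumes "bounded_functional \<phi>"
  shows "bounded_functional (Fw_adj a b p w \<phi>)"
proof -
  obtain C where C: "C \<ge> 0" "\<And>f. f \<in> lpab a b p \<Longrightarrow> cmod (\<phi> f) \<le> C * lpab_norm a b p f"
    using bounded_functional_bound[OF assms] by blast
  show ?thesis
  proof (rule bounded_functionalI[where C = "C * Fw_bound powr (1/p)"])
    fix f g assume f: "f \<in> lpab a b p" and g: "g \<in> lpab a b p"
    show "Fw_adj a b p w \<phi> (\<lambda>z. f z + g z) = Fw_adj a b p w \<phi> f + Fw_adj a b p w \<phi> g"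
      using f g lpab_add[OF f g]
      by (simp add: Fw_adj_def Fw_add bounded_functional_add[OF assms] Fw_in_lpab)
  next
    fix c f assume f: "f \<in> lpab a b p"
    show "Fw_adj a b p w \<phi> (\<lambda>z. c * f z) = c * Fw_adj a b p w \<phi> f"
      using f lpab_scale[OF f]
      by (simp add: Fw_adj_def Fw_scale bounded_functional_scale[OF assms] Fw_in_lpab)
  next
    fix f assume f: "f \<in> lpab a b p"
    have "cmod (Fw_adj a b p w \<phi> f) = cmod (\<phi> (Fw a b w f))" using f by (simp add: Fw_adj_def)
    also have "\<dots> \<le> C * lpab_norm a b p (Fw a b w f)" using C(2)[OF Fw_in_lpab[OF f]] .
    also have "\<dots> \<le> C * (Fw_bound powr (1/p) * lpab_norm a b p f)"
      using lpab_norm_Fw_le[OF f] C(1) by (intro mult_left_mono) auto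
    finally show "cmod (Fw_adj a b p w \<phi> f) \<le> C * Fw_bound powr (1/p) * lpab_norm a b p f"
      by (simp add: mult_ac)
  qed
qed

lemma Fw_adj_dual: "\<phi> \<in> dual a b p \<Longrightarrow> Fw_adj a b p w \<phi> \<in> dual a b p"
  using bounded_functional_Fw_adj[OF dual_bounded_functional] by (auto simp: dual_iff Fw_adj_def)

lemma Fw_adj_pow_dual: "\<phi> \<in> dual a b p \<Longrightarrow> (Fw_adj a b p w ^^ n) \<phi> \<in> dual a b p"
  by (induction n) (auto intro: Fw_adj_dual)

lemma Fw_adj_pow_apply: "f \<in> lpab a b p \<Longrightarrow> (Fw_adj a b p w ^^ n) \<phi> f = \<phi> ((Fw a b w ^^ n) f)"
proof (induction n arbitrary: f)
  case 0 then show ?case by simp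
next
  case (Suc n)
  have "(Fw_adj a b p w ^^ Suc n) \<phi> f = (Fw_adj a b p w ^^ n) \<phi> (Fw a b w f)"
    using Suc.prems by (simp add: Fw_adj_def)
  also have "\<dots> = \<phi> ((Fw a b w ^^ n) (Fw a b w f))" using Suc.IH[OF Fw_in_lpab[OF Suc.prems]] .
  finally show ?case by (simp add: funpow_Suc_right del: funpow.simps)
qed


section \<open>Functionals given by sequences in \<open>\<ell>\<^sup>q\<close>\<close>

definition q where "q = p / (p - 1)"

lemma q: "q > 1" "1 / p + 1 / q = 1" "(q - 1) * p = q" "q > 0"
  using p_gt_1 by (auto simp: q_def field_simps)

lemma q_ge_1: "q \<ge> 1"
  using q by simp

lemma lp_diff_q: "lp q s \<Longrightarrow> lp q t \<Longrightarrow> lp q (\<lambda>n. s n - t n)"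
  using lp_diff q_ge_1 by blast

lemma holder_pq:
  assumes "lp p x" "lp q y"
  shows "summable (\<lambda>n. x n * y n)"
    and "cmod (\<Sum>n. x n * y n) \<le> lpsum p x powr (1/p) * lpsum q y powr (1/q)"
  using holder_lp_sum[OF p_gt_1 q(1) q(2) assms] by auto

lemma represents_finite_sum: "represents a b p (\<lambda>k. if k < N then x k else 0) (\<lambda>z. \<Sum>k<N. x k * basis k z)"
proof (induction N)
  case 0 then show ?case using represents_zero by simp
next
  case (Suc N)
  have "represents a b p (\<lambda>k. (if k < N then x k else 0) + x N * (if k = N then 1 else 0))
          (\<lambda>z. (\<Sum>k<N. x k * basis k z) + x N * basis N z)"
    by (rule represents_add[OF Suc represents_scale[OF represents_basis]])
  moreover have "(\<lambda>k. (if k < N then x k else 0) + x N * (if k = N then 1 else 0)) = (\<lambda>k. if k < Suc N then x k else 0)"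
    by (rule ext) (simp add: less_Suc_eq)
  ultimately show ?case by simp
qed

lemma basis_in_lpab: "basis n \<in> lpab a b p" using represents_basis unfolding lpab_def by blast

lemma finite_sum_in_lpab: "(\<lambda>z. \<Sum>k<N. x k * basis k z) \<in> lpab a b p" using represents_finite_sum
  unfolding lpab_def by blast

lemma bounded_functional_finite_sum:
  assumes "bounded_functional \<phi>"
  shows "\<phi> (\<lambda>z. \<Sum>k<N. x k * basis k z) = (\<Sum>k<N. x k * \<phi> (basis k))"
proof (induction N)
  case 0 then show ?case using bounded_functional_zero[OF assms] by simp
next
  case (Suc N)
  have "\<phi> (\<lambda>z. \<Sum>k<Suc N. x k * basis k z) = \<phi> (\<lambda>z. (\<Sum>k<N. x k * basis k z) + x N * basis N z)"
    by simp
  also have "\<dots> = \<phi> (\<lambda>z. \<Sum>k<N. x k * basis k z) + \<phi> (\<lambda>z. x N * basis N z)"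
    by (rule bounded_functional_add[OF assms finite_sum_in_lpab lpab_scale[OF basis_in_lpab]])
  also have "\<dots> = (\<Sum>k<Suc N. x k * \<phi> (basis k))"
    using Suc bounded_functional_scale[OF assms basis_in_lpab] by simp
  finally show ?case .
qed

lemma represents_tail: assumes "g \<in> lpab a b p"
  shows "represents a b p (tail N (coefs a b p g)) (\<lambda>z. g z - (\<Sum>k<N. coefs a b p g k * basis k z))"
proof -
  have "represents a b p (\<lambda>n. coefs a b p g n + (-1) * (if n < N then coefs a b p g n else 0))
     (\<lambda>z. g z + (-1) * (\<Sum>k<N. coefs a b p g k * basis k z))"
    by (rule represents_add[OF lpab_represents[OF assms] represents_scale[OF represents_finite_sum]])
  moreover have "(\<lambda>n. coefs a b p g n + (-1) * (if n < N then coefs a b p g n else 0)) = tail N (coefs a b p g)"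
    by (auto simp: tail_def)
  ultimately show ?thesis by simp
qed


definition basis_values :: "cfunctional \<Rightarrow> nat \<Rightarrow> complex" where "basis_values \<psi> n = \<psi> (basis n)"

lemma lq_basis_values:
  assumes "bounded_functional \<psi>"
  shows "lp q (basis_values \<psi>)" "lpsum q (basis_values \<psi>) \<le> dual_norm a b p \<psi> powr q"
proof -
  let ?c = "basis_values \<psi>"
  have "\<forall>k. \<exists>t. t * ?c k = of_real (cmod (?c k) powr q) \<and> cmod t powr p = cmod (?c k) powr q"
    using conjugate_exponent_vector[OF q(1) q(3)] by metis
  then obtain t where tc: "\<And>k. t k * ?c k = of_real (cmod (?c k) powr q)"
    and tp: "\<And>k. cmod (t k) powr p = cmod (?c k) powr q"
    by metis
  have "(\<Sum>k<N. cmod (?c k) powr q) \<le> dual_norm a b p \<psi> powr q" for N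
  proof (rule le_powr_conjugate[OF p_gt_1 q(1) q(2)])
    define S where "S = (\<Sum>k<N. cmod (?c k) powr q)"
    define g where "g = (\<lambda>z. \<Sum>k<N. t k * basis k z)"
    have "lpsum p (\<lambda>k. if k < N then t k else 0) = (\<Sum>k<N. cmod (t k) powr p)"
      by (rule lpsum_truncate(2)) (use p_gt_1 in simp)
    then have "lpab_norm a b p g = S powr (1/p)"
      unfolding g_def lpab_norm_eq[OF represents_finite_sum] by (simp add: tp S_def)
    moreover have "\<psi> g = of_real S"
      unfolding g_def bounded_functional_finite_sum[OF assms] S_def
      by (simp add: tc[unfolded basis_values_def] basis_values_def)
    moreover have "S \<ge> 0" by (simp add: S_def sum_nonneg)
    ultimately have "S \<le> dual_norm a b p \<psi> * S powr (1/p)"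
      using dual_norm_bound[OF assms, of g] finite_sum_in_lpab by (simp add: g_def)
    then show "(\<Sum>k<N. cmod (?c k) powr q) \<le> dual_norm a b p \<psi> * (\<Sum>k<N. cmod (?c k) powr q) powr (1/p)"
      by (simp add: S_def)
  qed (simp add: sum_nonneg)
  from lp_lpsum_bounded[OF this] show "lp q ?c" "lpsum q ?c \<le> dual_norm a b p \<psi> powr q" by auto
qed

lemma dual_sums: assumes "bounded_functional \<psi>" "g \<in> lpab a b p"
  shows "(\<lambda>n. coefs a b p g n * basis_values \<psi> n) sums \<psi> g"
proof -
  let ?l = "coefs a b p g"
  have l: "lp p ?l" by (rule represents_lp[OF lpab_represents[OF assms(2)]])
  have ps: "(\<Sum>n<N. ?l n * basis_values \<psi> n) = \<psi> (\<lambda>z. \<Sum>k<N. ?l k * basis k z)" for N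
    unfolding bounded_functional_finite_sum[OF assms(1)] by (simp add: basis_values_def)
  have bnd: "cmod (\<psi> g - \<psi> (\<lambda>z. \<Sum>k<N. ?l k * basis k z)) \<le> dual_norm a b p \<psi> * lpsum p (tail N ?l) powr (1/p)" for N
  proof -
    have "\<psi> g - \<psi> (\<lambda>z. \<Sum>k<N. ?l k * basis k z) = \<psi> (\<lambda>z. g z - (\<Sum>k<N. ?l k * basis k z))"
      by (rule bounded_functional_diff[OF assms(1) assms(2) finite_sum_in_lpab, symmetric])
    moreover have "cmod (\<psi> (\<lambda>z. g z - (\<Sum>k<N. ?l k * basis k z))) \<le> dual_norm a b p \<psi> * lpab_norm a b p (\<lambda>z. g z - (\<Sum>k<N. ?l k * basis k z))"
      by (rule dual_norm_bound[OF assms(1) lpab_diff[OF assms(2) finite_sum_in_lpab]])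
    moreover have "lpab_norm a b p (\<lambda>z. g z - (\<Sum>k<N. ?l k * basis k z)) = lpsum p (tail N ?l) powr (1/p)"
      by (rule lpab_norm_eq[OF represents_tail[OF assms(2)]])
    ultimately show ?thesis by simp
  qed
  have t0: "(\<lambda>N. dual_norm a b p \<psi> * lpsum p (tail N ?l) powr (1/p)) \<longlonglongrightarrow> dual_norm a b p \<psi> * 0"
    using p_gt_1 by (intro tendsto_mult tendsto_const lpsum_tail_powr_tendsto_0[OF l]) auto
  have "(\<lambda>N. \<psi> g - \<psi> (\<lambda>z. \<Sum>k<N. ?l k * basis k z)) \<longlonglongrightarrow> 0"
    by (rule Lim_null_comparison[OF _ t0[simplified]]) (use bnd in auto)
  then have "(\<lambda>N. \<psi> g - (\<psi> g - \<psi> (\<lambda>z. \<Sum>k<N. ?l k * basis k z))) \<longlonglongrightarrow> \<psi> g - 0"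
    by (intro tendsto_diff tendsto_const)
  then show ?thesis unfolding sums_def ps by simp
qed

lemma dual_tail_bound: assumes "bounded_functional \<psi>" "g \<in> lpab a b p"
  shows "cmod (\<psi> g - (\<Sum>n<N. coefs a b p g n * basis_values \<psi> n)) \<le> lpab_norm a b p g * lpsum q (tail N (basis_values \<psi>)) powr (1/q)"
proof -
  let ?l = "coefs a b p g" and ?c = "basis_values \<psi>"
  have l: "lp p ?l" by (rule represents_lp[OF lpab_represents[OF assms(2)]])
  have c: "lp q (tail N ?c)" by (rule lp_tail[OF lq_basis_values(1)[OF assms(1)]])
  have "(\<lambda>n. ?l n * ?c n - (if n \<in> {..<N} then ?l n * ?c n else 0)) sums (\<psi> g - (\<Sum>n\<in>{..<N}. ?l n * ?c n))"
    by (intro sums_diff dual_sums[OF assms] sums_If_finite_set) auto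
  moreover have "(\<lambda>n. ?l n * ?c n - (if n \<in> {..<N} then ?l n * ?c n else 0)) = (\<lambda>n. ?l n * tail N ?c n)"
    by (auto simp: tail_def)
  ultimately have "\<psi> g - (\<Sum>n<N. ?l n * ?c n) = (\<Sum>n. ?l n * tail N ?c n)" by (simp add: sums_iff)
  also have "cmod \<dots> \<le> lpsum p ?l powr (1/p) * lpsum q (tail N ?c) powr (1/q)"
    by (rule holder_pq(2)[OF l c])
  also have "lpsum p ?l powr (1/p) = lpab_norm a b p g" by (simp add: lpab_norm_def lpsum_def)
  finally show ?thesis .
qed

definition pairing_seq :: "(nat \<Rightarrow> complex) \<Rightarrow> nat \<Rightarrow> complex" where
  "pairing_seq t n = t n + kappa n * t (Suc n)"

definition pairing_bound where "pairing_bound = 2 powr (q - 1) * (1 + kappa_max powr q)"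

lemma pairing_bound_pos: "pairing_bound > 0" unfolding pairing_bound_def
  by (simp add: add_pos_nonneg)

lemma lp_pairing_seq:
  assumes "lp q t"
  shows "lp q (pairing_seq t)" "lpsum q (pairing_seq t) \<le> pairing_bound * lpsum q t"
proof -
  have q1: "q \<ge> 1" using q by simp
  have l1: "lp q (\<lambda>n. kappa n * shift_left t n)" "lpsum q (\<lambda>n. kappa n * shift_left t n) \<le> kappa_max powr q * lpsum q (shift_left t)"
    using lp_mult_bounded[OF lp_shift_left(1)[OF assms] q(4) kappa_max(1)] by auto
  have e: "pairing_seq t = (\<lambda>n. t n + kappa n * shift_left t n)"
    by (auto simp: pairing_seq_def shift_left_def)
  show "lp q (pairing_seq t)" unfolding e by (rule lp_add(1)[OF assms l1(1) q1])
  have "lpsum q (pairing_seq t) \<le> 2 powr (q - 1) * (lpsum q t + lpsum q (\<lambda>n. kappa n * shift_left t n))"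
    unfolding e by (rule lp_add(2)[OF assms l1(1) q1])
  also have "\<dots> \<le> 2 powr (q - 1) * (lpsum q t + kappa_max powr q * lpsum q t)"
  proof -
    have "kappa_max powr q * lpsum q (shift_left t) \<le> kappa_max powr q * lpsum q t"
      by (rule mult_left_mono[OF lp_shift_left(2)[OF assms]]) simp
    then show ?thesis using l1(2) by (intro mult_left_mono add_left_mono) auto
  qed
  finally show "lpsum q (pairing_seq t) \<le> pairing_bound * lpsum q t"
    by (simp add: pairing_bound_def algebra_simps)
qed

text \<open>In terms of Taylor coefficients, \<open>functional t g = (\<Sum>n. taylor_coeff g n / a n * t n)\<close>
  (see \<open>functional_series_taylor\<close>); the coefficient form below makes boundedness evident.\<close>
definition functional :: "(nat \<Rightarrow> complex) \<Rightarrow> cfunctional" where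
  "functional t = (\<lambda>g. if g \<in> lpab a b p then (\<Sum>n. coefs a b p g n * pairing_seq t n) else 0)"

lemma functional_sums: assumes "lp q t" "g \<in> lpab a b p"
  shows "(\<lambda>n. coefs a b p g n * pairing_seq t n) sums functional t g"
  using holder_pq(1)[OF represents_lp[OF lpab_represents[OF assms(2)]] lp_pairing_seq(1)[OF assms(1)]] assms(2)
  by (simp add: functional_def summable_sums)

lemma functional_bound: assumes "lp q t" "g \<in> lpab a b p"
  shows "cmod (functional t g) \<le> (pairing_bound * lpsum q t) powr (1/q) * lpab_norm a b p g"
proof -
  have "cmod (functional t g) \<le> lpsum p (coefs a b p g) powr (1/p) * lpsum q (pairing_seq t) powr (1/q)"
    using holder_pq(2)[OF represents_lp[OF lpab_represents[OF assms(2)]] lp_pairing_seq(1)[OF assms(1)]] assms(2)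
    by (simp add: functional_def)
  also have "\<dots> \<le> lpsum p (coefs a b p g) powr (1/p) * (pairing_bound * lpsum q t) powr (1/q)"
    using lp_pairing_seq[OF assms(1)] q
    by (intro mult_left_mono powr_mono2) (auto intro: lpsum_nonneg)
  finally show ?thesis by (simp add: lpab_norm_def lpsum_def mult_ac)
qed

lemma functional_dual: assumes "lp q t" shows "functional t \<in> dual a b p"
proof -
  have "bounded_functional (functional t)"
  proof (rule bounded_functionalI[where C = "(pairing_bound * lpsum q t) powr (1/q)"])
    fix f g assume f: "f \<in> lpab a b p" and g: "g \<in> lpab a b p"
    have "(\<lambda>n. coefs a b p f n * pairing_seq t n + coefs a b p g n * pairing_seq t n) sums (functional t f + functional t g)"
      by (intro sums_add functional_sums assms f g)
    moreover have "(\<lambda>n. coefs a b p (\<lambda>z. f z + g z) n * pairing_seq t n) = (\<lambda>n. coefs a b p f n * pairing_seq t n + coefs a b p g n * pairing_seq t n)"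
      by (simp add: coefs_add[OF f g] algebra_simps)
    ultimately show "functional t (\<lambda>z. f z + g z) = functional t f + functional t g"
      using functional_sums[OF assms lpab_add[OF f g]] by (metis sums_unique2)
  next
    fix c f assume f: "f \<in> lpab a b p"
    have "(\<lambda>n. c * (coefs a b p f n * pairing_seq t n)) sums (c * functional t f)"
      by (intro sums_mult functional_sums assms f)
    moreover have "(\<lambda>n. coefs a b p (\<lambda>z. c * f z) n * pairing_seq t n) = (\<lambda>n. c * (coefs a b p f n * pairing_seq t n))"
      by (simp add: coefs_scale[OF f] algebra_simps)
    ultimately show "functional t (\<lambda>z. c * f z) = c * functional t f"
      using functional_sums[OF assms lpab_scale[OF f]] by (metis sums_unique2)
  qed (rule functional_bound[OF assms])
  then show ?thesis by (auto simp: dual_iff functional_def)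
qed

lemma pairing_seq_diff: "pairing_seq (\<lambda>n. s n - t n) n = pairing_seq s n - pairing_seq t n"
  by (simp add: pairing_seq_def algebra_simps)

lemma functional_diff: assumes "lp q s" "lp q t"
  shows "functional s g - functional t g = functional (\<lambda>n. s n - t n) g"
proof (cases "g \<in> lpab a b p")
  case True
  have "(\<lambda>n. coefs a b p g n * pairing_seq s n - coefs a b p g n * pairing_seq t n) sums (functional s g - functional t g)"
    by (intro sums_diff functional_sums assms True)
  moreover have "(\<lambda>n. coefs a b p g n * pairing_seq s n - coefs a b p g n * pairing_seq t n) = (\<lambda>n. coefs a b p g n * pairing_seq (\<lambda>n. s n - t n) n)"
    by (simp add: pairing_seq_diff algebra_simps)
  ultimately show ?thesis
    using functional_sums[OF lp_diff_q[OF assms] True] q by (metis sums_unique2 less_imp_le)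
qed (simp add: functional_def)

lemma dual_norm_functional_diff_le: assumes "lp q s" "lp q t"
  shows "dual_norm a b p (\<lambda>f. functional s f - functional t f) \<le> (pairing_bound * lpsum q (\<lambda>n. s n - t n)) powr (1/q)"
proof (rule dual_norm_le)
  fix f assume f: "f \<in> lpab a b p"
  show "cmod (functional s f - functional t f) \<le> (pairing_bound * lpsum q (\<lambda>n. s n - t n)) powr (1/q) * lpab_norm a b p f"
    unfolding functional_diff[OF assms] by (rule functional_bound[OF lp_diff_q[OF assms] f])
qed simp

definition backward_shift :: "(nat \<Rightarrow> complex) \<Rightarrow> nat \<Rightarrow> complex" where "backward_shift t n = bweight n * t (Suc n)"

lemma lp_backward_shift: assumes "lp q t" shows "lp q (backward_shift t)"
proof -
  have "lp q (\<lambda>n. bweight n * shift_left t n)"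
    using lp_mult_bounded(1)[OF lp_shift_left(1)[OF assms] q(4) bweight_max(1)] .
  then show ?thesis unfolding backward_shift_def shift_left_def .
qed

lemma lp_backward_shift_pow: "lp q t \<Longrightarrow> lp q ((backward_shift ^^ n) t)"
  by (induction n) (auto intro: lp_backward_shift)

lemma functional_series_taylor: assumes x: "lp p x" and t: "lp q t"
  shows "(\<lambda>n. t n / a n * taylor_of x n) sums (\<Sum>n. x n * pairing_seq t n)"
proof -
  have l1: "lp q (\<lambda>n. kappa n * shift_left t n)"
    using lp_mult_bounded(1)[OF lp_shift_left(1)[OF t] q(4) kappa_max(1)] .
  have sA: "(\<lambda>n. x n * t n) sums (\<Sum>n. x n * t n)" using holder_pq(1)[OF x t]
    by (simp add: summable_sums)
  have sB: "(\<lambda>n. x n * (kappa n * shift_left t n)) sums (\<Sum>n. x n * (kappa n * shift_left t n))"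
    using holder_pq(1)[OF x l1] by (simp add: summable_sums)
  have sB': "shift_right (\<lambda>n. x n * (kappa n * shift_left t n)) sums (\<Sum>n. x n * (kappa n * shift_left t n))"
  proof -
    have "(\<lambda>n. shift_right (\<lambda>n. x n * (kappa n * shift_left t n)) (Suc n)) sums (\<Sum>n. x n * (kappa n * shift_left t n))"
      using sB by (simp add: shift_right_def)
    then show ?thesis by (subst (asm) sums_Suc_iff) (simp add: shift_right_def)
  qed
  have e1: "(\<lambda>n. t n / a n * taylor_of x n) = (\<lambda>n. x n * t n + shift_right (\<lambda>n. x n * (kappa n * shift_left t n)) n)"
    using a_nonzero
    by (auto simp: taylor_of_def shift_right_def shift_left_def kappa_def field_simps split: nat.split)
  have e2: "(\<lambda>n. x n * pairing_seq t n) = (\<lambda>n. x n * t n + x n * (kappa n * shift_left t n))"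
    by (auto simp: pairing_seq_def shift_left_def algebra_simps)
  have s1: "(\<lambda>n. x n * pairing_seq t n) sums ((\<Sum>n. x n * t n) + (\<Sum>n. x n * (kappa n * shift_left t n)))"
    unfolding e2 by (rule sums_add[OF sA sB])
  have s2: "(\<lambda>n. t n / a n * taylor_of x n) sums ((\<Sum>n. x n * t n) + (\<Sum>n. x n * (kappa n * shift_left t n)))"
    unfolding e1 by (rule sums_add[OF sA sB'])
  show ?thesis using s2 sums_unique[OF s1] by simp
qed

lemma Fw_adj_functional:
  assumes t: "lp q t"
  shows "Fw_adj a b p w (functional t) = functional (backward_shift t)"
proof
  fix g show "Fw_adj a b p w (functional t) g = functional (backward_shift t) g"
  proof (cases "g \<in> lpab a b p")
    case False then show ?thesis by (simp add: Fw_adj_def functional_def)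
  next
    case True
    let ?l = "coefs a b p g" and ?l' = "coefs a b p (Fw a b w g)"
    have r: "represents a b p ?l g" by (rule lpab_represents[OF True])
    have r': "represents a b p ?l' (Fw a b w g)" by (rule lpab_represents[OF Fw_in_lpab[OF True]])
    have m': "taylor_of ?l' n = (case n of 0 \<Rightarrow> 0 | Suc k \<Rightarrow> w k * taylor_of ?l k)" for n
      using represents_taylor_coeff[OF r', of n] taylor_coeff_Fw_0[OF r] taylor_coeff_Fw_Suc[OF r] represents_taylor_coeff[OF r]
      by (cases n) auto
    have s1: "(\<lambda>n. t n / a n * taylor_of ?l' n) sums Fw_adj a b p w (functional t) g"
      using functional_series_taylor[OF represents_lp[OF r'] t] Fw_in_lpab[OF True] True
      by (simp add: Fw_adj_def functional_def)
    have "(\<lambda>n. t (Suc n) / a (Suc n) * taylor_of ?l' (Suc n)) sums Fw_adj a b p w (functional t) g"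
      using s1 by (subst sums_Suc_iff) (simp add: m')
    moreover have "(\<lambda>n. t (Suc n) / a (Suc n) * taylor_of ?l' (Suc n)) = (\<lambda>n. backward_shift t n / a n * taylor_of ?l n)"
      using a_nonzero by (auto simp: m' backward_shift_def bweight_def field_simps)
    ultimately have s2: "(\<lambda>n. backward_shift t n / a n * taylor_of ?l n) sums Fw_adj a b p w (functional t) g"
      by simp
    have s3: "(\<lambda>n. backward_shift t n / a n * taylor_of ?l n) sums functional (backward_shift t) g"
      using functional_series_taylor[OF represents_lp[OF r] lp_backward_shift[OF t]] True
      by (simp add: functional_def)
    show ?thesis using sums_unique2[OF s2 s3] .
  qed
qed

lemma Fw_adj_pow_functional: "lp q t \<Longrightarrow> (Fw_adj a b p w ^^ n) (functional t) = functional ((backward_shift ^^ n) t)"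
  by (induction n) (auto simp: Fw_adj_functional lp_backward_shift_pow)


primrec pairing_inverse_aux :: "(nat \<Rightarrow> complex) \<Rightarrow> nat \<Rightarrow> nat \<Rightarrow> complex" where
  "pairing_inverse_aux c N 0 = 0"
| "pairing_inverse_aux c N (Suc j) = c (N - Suc j) - kappa (N - Suc j) * pairing_inverse_aux c N j"

definition pairing_inverse :: "(nat \<Rightarrow> complex) \<Rightarrow> nat \<Rightarrow> nat \<Rightarrow> complex" where
  "pairing_inverse c N n = (if n < N then pairing_inverse_aux c N (N - n) else 0)"

lemma pairing_seq_pairing_inverse: "pairing_seq (pairing_inverse c N) n = (if n < N then c n else 0)"
proof (cases "n < N")
  case True
  have e: "N - n = Suc (N - Suc n)" using True by arith
  have e2: "N - Suc (N - Suc n) = n" using True by arith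
  have "pairing_inverse c N (Suc n) = pairing_inverse_aux c N (N - Suc n)"
    using True by (cases "Suc n < N") (auto simp: pairing_inverse_def)
  then show ?thesis using True by (simp add: pairing_seq_def pairing_inverse_def e e2)
qed (simp add: pairing_seq_def pairing_inverse_def)

lemma pairing_inverse_support: "n \<ge> N \<Longrightarrow> pairing_inverse c N n = 0"
  by (simp add: pairing_inverse_def)

lemma lp_pairing_inverse: "lp q (pairing_inverse c N)"
  by (rule lp_finite_support[OF pairing_inverse_support]) (use q in auto)

lemma functional_pairing_inverse: assumes "g \<in> lpab a b p"
  shows "functional (pairing_inverse c N) g = (\<Sum>n<N. coefs a b p g n * c n)"
proof -
  have "(\<lambda>n. coefs a b p g n * pairing_seq (pairing_inverse c N) n) = (\<lambda>n. if n \<in> {..<N} then coefs a b p g n * c n else 0)"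
    by (auto simp: pairing_seq_pairing_inverse)
  then have "(\<lambda>n. coefs a b p g n * pairing_seq (pairing_inverse c N) n) sums (\<Sum>n<N. coefs a b p g n * c n)"
    using sums_If_finite_set[of "{..<N}" "\<lambda>n. coefs a b p g n * c n"] by simp
  then show ?thesis using functional_sums[OF lp_pairing_inverse assms] by (metis sums_unique2)
qed

lemma finite_functionals_dense: assumes "\<psi> \<in> dual a b p" "e > 0"
  shows "\<exists>N s. lp q s \<and> (\<forall>n\<ge>N. s n = 0) \<and> dual_norm a b p (\<lambda>f. \<psi> f - functional s f) < e"
proof -
  have bf: "bounded_functional \<psi>" by (rule dual_bounded_functional[OF assms(1)])
  let ?c = "basis_values \<psi>"
  have c: "lp q ?c" by (rule lq_basis_values(1)[OF bf])
  have t: "(\<lambda>N. lpsum q (tail N ?c) powr (1/q)) \<longlonglongrightarrow> 0"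
    using q by (intro lpsum_tail_powr_tendsto_0[OF c]) auto
  then obtain N where N: "lpsum q (tail N ?c) powr (1/q) < e"
    using assms(2) order_tendstoD(2)[OF t, of e] by (auto simp: eventually_sequentially)
  have "dual_norm a b p (\<lambda>f. \<psi> f - functional (pairing_inverse ?c N) f) \<le> lpsum q (tail N ?c) powr (1/q)"
  proof (rule dual_norm_le)
    fix f assume f: "f \<in> lpab a b p"
    show "cmod (\<psi> f - functional (pairing_inverse ?c N) f) \<le> lpsum q (tail N ?c) powr (1/q) * lpab_norm a b p f"
      using dual_tail_bound[OF bf f, of N] by (simp add: functional_pairing_inverse[OF f] mult_ac)
  qed simp
  then show ?thesis using N lp_pairing_inverse pairing_inverse_support
    by (intro exI[of _ N] exI[of _ "pairing_inverse ?c N"]) auto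
qed



section \<open>Unbounded weight products give a hypercyclic functional\<close>

definition bweight_prod :: "nat \<Rightarrow> complex" where "bweight_prod n = (\<Prod>i<n. bweight i)"
definition bweight_prod_from :: "nat \<Rightarrow> nat \<Rightarrow> complex" where "bweight_prod_from j m = (\<Prod>i\<in>{j..<j+m}. bweight i)"

lemma backward_shift_pow: "(backward_shift ^^ m) x n = bweight_prod_from n m * x (n + m)"
proof (induction m arbitrary: n)
  case 0 then show ?case by (simp add: bweight_prod_from_def)
next
  case (Suc m)
  have "(backward_shift ^^ Suc m) x n = bweight n * (bweight_prod_from (Suc n) m * x (Suc n + m))"
    by (simp add: backward_shift_def Suc)
  moreover have "bweight n * bweight_prod_from (Suc n) m = bweight_prod_from n (Suc m)"
    unfolding bweight_prod_from_def by (simp add: prod.atLeast_Suc_lessThan[symmetric])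
  ultimately show ?case by (simp add: mult_ac)
qed

lemma bweight_prod_add: "bweight_prod (j + m) = bweight_prod j * bweight_prod_from j m"
  unfolding bweight_prod_def bweight_prod_from_def lessThan_atLeast0
  by (rule prod.atLeastLessThan_concat[symmetric]) auto

lemma bweight_prod_nonzero: "bweight_prod n \<noteq> 0" by (simp add: bweight_prod_def bweight_nonzero)
lemma bweight_prod_from_nonzero: "bweight_prod_from j m \<noteq> 0"
  by (simp add: bweight_prod_from_def bweight_nonzero)

lemma bweight_prod_from_le: "cmod (bweight_prod_from j m) \<le> bweight_max ^ m"
proof -
  have "cmod (bweight_prod_from j m) \<le> (\<Prod>i\<in>{j..<j+m}. cmod (bweight i))"
    unfolding bweight_prod_from_def by (rule norm_prod_le)
  also have "\<dots> \<le> (\<Prod>i\<in>{j..<j+m}. bweight_max)" by (intro prod_mono) (auto intro: bweight_max(1))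
  also have "\<dots> = bweight_max ^ m" by simp
  finally show ?thesis .
qed


lemma bweight_prod_from_large:
  assumes unb: "\<not> bdd_above (range (\<lambda>n. cmod (bweight_prod n)))"
  shows "\<exists>m\<ge>L. \<forall>j<len. cmod (bweight_prod_from j m) \<ge> H"
proof -
  define Q where "Q = 1 + (\<Sum>j<len. cmod (bweight_prod j))"
  have Q1: "Q \<ge> 1" by (simp add: Q_def sum_nonneg)
  have PQ: "cmod (bweight_prod j) \<le> Q" if "j < len" for j
  proof -
    have "cmod (bweight_prod j) \<le> (\<Sum>j<len. cmod (bweight_prod j))" using that
      by (intro member_le_sum) auto
    then show ?thesis by (simp add: Q_def)
  qed
  obtain n where n: "n \<ge> L + len" "cmod (bweight_prod n) > max H 0 * Q * bweight_max ^ len"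
    using unbounded_beyond[OF unb] by blast
  define m where "m = n - len"
  have "cmod (bweight_prod_from j m) \<ge> H" if j: "j < len" for j
  proof -
    have "bweight_prod n = bweight_prod j * bweight_prod_from j m * bweight_prod_from (j + m) (len - j)"
      using bweight_prod_add[of "j + m" "len - j"] bweight_prod_add[of j m] j n by (simp add: m_def)
    moreover have "cmod (bweight_prod_from (j + m) (len - j)) \<le> bweight_max ^ len"
      using bweight_prod_from_le[of "j + m" "len - j"] power_increasing[of "len - j" len bweight_max]
        bweight_max(2) by simp
    ultimately have "cmod (bweight_prod n) \<le> cmod (bweight_prod j) * cmod (bweight_prod_from j m) * bweight_max ^ len"
      by (simp add: norm_mult mult_left_mono)
    with n(2) have "max H 0 * Q * bweight_max ^ len < cmod (bweight_prod j) * cmod (bweight_prod_from j m) * bweight_max ^ len"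
      by linarith
    then have "max H 0 * Q < cmod (bweight_prod j) * cmod (bweight_prod_from j m)"
      using bweight_max(2) by (simp add: mult_less_cancel_right_pos)
    also have "\<dots> \<le> Q * cmod (bweight_prod_from j m)" using PQ[OF j] by (intro mult_right_mono) auto
    finally show ?thesis using Q1 by (simp add: mult.commute)
  qed
  moreover have "m \<ge> L" using n by (simp add: m_def)
  ultimately show ?thesis by blast
qed

definition bweight_max_q where "bweight_max_q = bweight_max powr q"

lemma bweight_max_q_ge_1: "bweight_max_q \<ge> 1"
  unfolding bweight_max_q_def using bweight_max(2) q by (intro ge_one_powr_ge_zero) auto

lemma bweight_prod_from_powr_le: "cmod (bweight_prod_from j m) powr q \<le> bweight_max_q ^ m"
proof -
  have "cmod (bweight_prod_from j m) powr q \<le> (bweight_max ^ m) powr q"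
    using q by (intro powr_mono2 bweight_prod_from_le) auto
  also have "(bweight_max ^ m) powr q = bweight_max_q ^ m" unfolding bweight_max_q_def
    using bweight_max(2)
    by (simp add: powr_realpow[symmetric] powr_powr mult.commute)
  finally show ?thesis .
qed

definition target_bound :: "(nat \<Rightarrow> nat \<Rightarrow> complex) \<Rightarrow> nat \<Rightarrow> real" where
  "target_bound y k = 1 + (\<Sum>j<Suc k. cmod (y k j))"

lemma target_bound_ge_1: "target_bound y k \<ge> 1"
  by (simp add: target_bound_def sum_nonneg)

lemma norm_le_target_bound: "j \<le> k \<Longrightarrow> cmod (y k j) \<le> target_bound y k"
  using member_le_sum[of j "{..<Suc k}" "\<lambda>j. cmod (y k j)"] by (simp add: target_bound_def)

definition tolerance where "tolerance i m = ((1/2) ^ i / bweight_max_q ^ m / (i + 2)) powr (1/q)"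

lemma tolerance_pos: "tolerance i m > 0"
  using bweight_max_q_ge_1 by (simp add: tolerance_def)

text \<open>Block \<open>k\<close> of the hypercyclic vector starts at \<open>block_start k\<close> and carries row \<open>k\<close> of the
  targets divided by weight products so large that, after \<open>block_start k\<close> backward shifts, all
  later blocks together contribute less than \<open>(1/2)\<^sup>k\<close>.\<close>

lemma block_starts_exist:
  assumes unb: "\<not> bdd_above (range (\<lambda>n. cmod (bweight_prod n)))"
  obtains m :: "nat \<Rightarrow> nat" where "m 0 = 0" "\<And>k. m (Suc k) \<ge> m k + Suc k"
    "\<And>k j. j < Suc (Suc k) \<Longrightarrow>
       target_bound y (Suc k) / tolerance (Suc k) (m k) \<le> cmod (bweight_prod_from j (m (Suc k)))"
proof -
  have "\<exists>m. \<forall>k. (k = 0 \<longrightarrow> m k = 0) \<and> m (Suc k) \<ge> m k + Suc k \<and>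
      (\<forall>j<Suc (Suc k). target_bound y (Suc k) / tolerance (Suc k) (m k) \<le> cmod (bweight_prod_from j (m (Suc k))))"
    by (rule dependent_nat_choice[where P = "\<lambda>k x. k = 0 \<longrightarrow> x = 0" and Q = "\<lambda>k x x'. x' \<ge> x + Suc k \<and>
        (\<forall>j<Suc (Suc k). target_bound y (Suc k) / tolerance (Suc k) x \<le> cmod (bweight_prod_from j x'))"])
      (use bweight_prod_from_large[OF unb] in auto)
  then show ?thesis using that by blast
qed

context
  fixes targets :: "nat \<Rightarrow> nat \<Rightarrow> complex" and block_start :: "nat \<Rightarrow> nat"
  assumes targets_support: "\<And>k j. k < j \<Longrightarrow> targets k j = 0"
    and block_start_0: "block_start 0 = 0"
    and block_start_Suc: "\<And>k. block_start (Suc k) \<ge> block_start k + Suc k"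
    and block_start_prod: "\<And>k j. j < Suc (Suc k) \<Longrightarrow>
      target_bound targets (Suc k) / tolerance (Suc k) (block_start k) \<le> cmod (bweight_prod_from j (block_start (Suc k)))"
begin

lemma block_start_mono: "i \<le> j \<Longrightarrow> block_start i \<le> block_start j"
proof (induction j rule: dec_induct)
  case (step n)
  have "block_start n \<le> block_start (Suc n)" using block_start_Suc[of n] by linarith
  with step show ?case by linarith
qed simp

lemma block_start_ge: "block_start k \<ge> k"
proof (induction k)
  case (Suc k)
  have "block_start k + Suc k \<le> block_start (Suc k)" by (rule block_start_Suc)
  with Suc show ?case by linarith
qed (simp add: block_start_0)

definition block_of where "block_of n = (GREATEST k. block_start k \<le> n)"

lemma block_of: "block_start (block_of n) \<le> n" "n < block_start (Suc (block_of n))"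
proof -
  have b: "\<forall>y. block_start y \<le> n \<longrightarrow> y \<le> n" using block_start_ge order.trans by blast
  show 1: "block_start (block_of n) \<le> n" unfolding block_of_def
    by (rule GreatestI_nat[of _ 0 n]) (use b block_start_0 in auto)
  show "n < block_start (Suc (block_of n))"
  proof (rule ccontr)
    assume "\<not> ?thesis"
    then have "Suc (block_of n) \<le> block_of n" unfolding block_of_def[of n]
      by (intro Greatest_le_nat[of _ _ n]) (use b block_start_0 in auto)
    then show False by simp
  qed
qed

lemma block_of_eq: assumes "block_start k \<le> n" "n < block_start (Suc k)" shows "block_of n = k"
proof (rule ccontr)
  assume ne: "block_of n \<noteq> k"
  show False
  proof (cases "block_of n < k")
    case True
    then have "block_start (Suc (block_of n)) \<le> block_start k" by (intro block_start_mono) simp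
    then show False using block_of(2)[of n] assms by simp
  next
    case False
    then have "Suc k \<le> block_of n" using ne by simp
    then have "block_start (Suc k) \<le> block_start (block_of n)" by (rule block_start_mono)
    then show False using block_of(1)[of n] assms by simp
  qed
qed

definition hc_seq where "hc_seq n = targets (block_of n) (n - block_start (block_of n)) / bweight_prod_from (n - block_start (block_of n)) (block_start (block_of n))"

lemma hc_seq_block:
  assumes "j < block_start (Suc k) - block_start k"
  shows "hc_seq (block_start k + j) = targets k j / bweight_prod_from j (block_start k)"
proof -
  have "block_of (block_start k + j) = k" using assms by (intro block_of_eq) auto
  then show ?thesis by (simp add: hc_seq_def)
qed

lemma hc_seq_block_le: "cmod (targets (Suc i) j / bweight_prod_from j (block_start (Suc i))) \<le> tolerance (Suc i) (block_start i)"
proof (cases "j < Suc (Suc i)")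
  case True
  have large: "cmod (bweight_prod_from j (block_start (Suc i))) \<ge> target_bound targets (Suc i) / tolerance (Suc i) (block_start i)"
    by (rule block_start_prod[OF True])
  have Y: "target_bound targets (Suc i) > 0" using target_bound_ge_1[of targets "Suc i"] by linarith
  have pvp: "cmod (bweight_prod_from j (block_start (Suc i))) > 0" using bweight_prod_from_nonzero
    by simp
  have "cmod (targets (Suc i) j) \<le> target_bound targets (Suc i)"
    using True by (intro norm_le_target_bound) simp
  also have "target_bound targets (Suc i) \<le> tolerance (Suc i) (block_start i) * cmod (bweight_prod_from j (block_start (Suc i)))"
    using large tolerance_pos[of "Suc i" "block_start i"] by (simp add: divide_le_eq mult.commute)
  finally show ?thesis using pvp by (simp add: norm_divide divide_le_eq)
next
  case False then show ?thesis
    using targets_support[of "Suc i" j] tolerance_pos[of "Suc i" "block_start i"] by simp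
qed

definition block_lpsum where "block_lpsum k = (\<Sum>n\<in>{block_start k..<block_start (Suc k)}. cmod (hc_seq n) powr q)"

lemma block_lpsum_eq: "block_lpsum k = (\<Sum>j<Suc k. cmod (targets k j / bweight_prod_from j (block_start k)) powr q)"
proof -
  define G where "G = block_start (Suc k) - block_start k"
  have G: "G \<ge> Suc k" using block_start_Suc[of k] by (simp add: G_def)
  have "block_lpsum k = (\<Sum>j\<in>{0..<G}. cmod (hc_seq (j + block_start k)) powr q)"
    unfolding block_lpsum_def
    using sum.shift_bounds_nat_ivl[of "\<lambda>n. cmod (hc_seq n) powr q" 0 "block_start k" G] block_start_Suc[of k]
    by (simp add: G_def)
  also have "\<dots> = (\<Sum>j\<in>{0..<G}. cmod (targets k j / bweight_prod_from j (block_start k)) powr q)"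
  proof (intro sum.cong refl)
    fix j assume "j \<in> {0..<G}"
    then have "j < block_start (Suc k) - block_start k" by (simp add: G_def)
    from hc_seq_block[OF this] show "cmod (hc_seq (j + block_start k)) powr q = cmod (targets k j / bweight_prod_from j (block_start k)) powr q"
      by (simp add: add.commute)
  qed
  also have "\<dots> = (\<Sum>j\<in>{0..<Suc k}. cmod (targets k j / bweight_prod_from j (block_start k)) powr q)"
    using G targets_support q by (intro sum.mono_neutral_right) auto
  finally show ?thesis by (simp add: atLeast0LessThan)
qed

lemma block_lpsum_le: "block_lpsum (Suc i) \<le> (1/2) ^ Suc i / bweight_max_q ^ block_start i"
proof -
  have "block_lpsum (Suc i) \<le> (\<Sum>j<Suc (Suc i). tolerance (Suc i) (block_start i) powr q)"
    unfolding block_lpsum_eq using q by (intro sum_mono powr_mono2 hc_seq_block_le) auto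
  also have "\<dots> = Suc (Suc i) * ((1/2) ^ Suc i / bweight_max_q ^ block_start i / (Suc i + 2))"
    using q bweight_max_q_ge_1 by (simp add: tolerance_def powr_powr)
  also have "\<dots> \<le> (1/2) ^ Suc i / bweight_max_q ^ block_start i"
  proof -
    have X: "(1/2::real) ^ Suc i / bweight_max_q ^ block_start i \<ge> 0" using bweight_max_q_ge_1
      by simp
    have f: "real (Suc (Suc i)) / (real (Suc i) + 2) \<le> 1" by simp
    have "real (Suc (Suc i)) * ((1/2) ^ Suc i / bweight_max_q ^ block_start i / (real (Suc i) + 2)) =
        (1/2) ^ Suc i / bweight_max_q ^ block_start i * (real (Suc (Suc i)) / (real (Suc i) + 2))" by simp
    also have "\<dots> \<le> (1/2) ^ Suc i / bweight_max_q ^ block_start i" by (rule mult_left_le[OF f X])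
    finally show ?thesis by simp
  qed
  finally show ?thesis .
qed

lemma sum_blocks: "k0 \<le> K \<Longrightarrow> (\<Sum>n\<in>{block_start k0..<block_start K}. g n) = (\<Sum>k\<in>{k0..<K}. \<Sum>n\<in>{block_start k..<block_start (Suc k)}. g n)"
proof (induction K rule: dec_induct)
  case base then show ?case by simp
next
  case (step K)
  have "(\<Sum>n\<in>{block_start k0..<block_start (Suc K)}. g n) = (\<Sum>n\<in>{block_start k0..<block_start K}. g n) + (\<Sum>n\<in>{block_start K..<block_start (Suc K)}. g n)"
    using step block_start_mono[of k0 K] block_start_mono[of K "Suc K"]
    by (intro sum.atLeastLessThan_concat[symmetric]) auto
  then show ?case using step by simp
qed

lemma hc_seq_tail_le: "(\<Sum>n\<in>{block_start (Suc k)..<block_start K}. cmod (hc_seq n) powr q) \<le> (1/2) ^ k / bweight_max_q ^ block_start k"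
proof (cases "Suc k \<le> K")
  case True
  have "(\<Sum>n\<in>{block_start (Suc k)..<block_start K}. cmod (hc_seq n) powr q) = (\<Sum>i\<in>{Suc k..<K}. block_lpsum i)"
    unfolding block_lpsum_def by (rule sum_blocks[OF True])
  also have "\<dots> \<le> (\<Sum>i\<in>{Suc k..<K}. (1/2) ^ i / bweight_max_q ^ block_start k)"
  proof (intro sum_mono)
    fix i assume i: "i \<in> {Suc k..<K}"
    then obtain i' where i': "i = Suc i'" "i' \<ge> k" by (cases i) auto
    have "block_lpsum i \<le> (1/2) ^ i / bweight_max_q ^ block_start i'" using block_lpsum_le[of i'] i'
      by simp
    also have "\<dots> \<le> (1/2) ^ i / bweight_max_q ^ block_start k"
      using bweight_max_q_ge_1 block_start_mono[OF i'(2)]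
      by (intro divide_left_mono power_increasing) auto
    finally show "block_lpsum i \<le> (1/2) ^ i / bweight_max_q ^ block_start k" .
  qed
  also have "\<dots> = (\<Sum>i\<in>{Suc k..<K}. (1/2::real) ^ i) / bweight_max_q ^ block_start k"
    by (simp add: sum_divide_distrib)
  also have "\<dots> \<le> (1/2) ^ k / bweight_max_q ^ block_start k" using bweight_max_q_ge_1
    by (intro divide_right_mono sum_half_powers_le) auto
  finally show ?thesis .
next
  case False
  then have "block_start K \<le> block_start (Suc k)" by (intro block_start_mono) simp
  then show ?thesis using bweight_max_q_ge_1 by simp
qed

lemma lp_hc_seq: "lp q hc_seq"
proof -
  have b: "(\<Sum>n<N. cmod (hc_seq n) powr q) \<le> block_lpsum 0 + 1" for N
  proof -
    have "(\<Sum>n<N. cmod (hc_seq n) powr q) \<le> (\<Sum>n<block_start N. cmod (hc_seq n) powr q)"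
      using block_start_ge[of N] by (intro sum_mono2) auto
    also have "\<dots> = (\<Sum>n\<in>{block_start 0..<block_start N}. cmod (hc_seq n) powr q)"
      by (simp add: atLeast0LessThan block_start_0)
    also have "\<dots> = (\<Sum>n\<in>{block_start 0..<block_start (Suc 0)}. cmod (hc_seq n) powr q) + (\<Sum>n\<in>{block_start (Suc 0)..<block_start N}. cmod (hc_seq n) powr q)"
      if "N \<ge> 1" using that block_start_mono[of 0 "Suc 0"] block_start_mono[of "Suc 0" N]
        by (intro sum.atLeastLessThan_concat[symmetric]) auto
    finally have 1: "N \<ge> 1 \<Longrightarrow> (\<Sum>n<N. cmod (hc_seq n) powr q) \<le> block_lpsum 0 + (\<Sum>n\<in>{block_start (Suc 0)..<block_start N}. cmod (hc_seq n) powr q)"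
      by (simp add: block_lpsum_def)
    have 2: "(\<Sum>n\<in>{block_start (Suc 0)..<block_start N}. cmod (hc_seq n) powr q) \<le> 1"
      using hc_seq_tail_le[of 0 N] by (simp add: block_start_0)
    have "block_lpsum 0 \<ge> 0" by (simp add: block_lpsum_def sum_nonneg)
    show ?thesis
    proof (cases "N \<ge> 1")
      case True then show ?thesis using 1 2 by linarith
    next
      case False then have "N = 0" by simp
      then show ?thesis using \<open>block_lpsum 0 \<ge> 0\<close> by simp
    qed
  qed
  show ?thesis unfolding lp_def by (rule summableI_nonneg_bounded[OF _ b]) simp
qed

lemma backward_shift_hc_seq_approx: "lpsum q (\<lambda>j. (backward_shift ^^ block_start k) hc_seq j - targets k j) \<le> (1/2) ^ k"
proof -
  define d where "d j = (backward_shift ^^ block_start k) hc_seq j - targets k j" for j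
  define G where "G = block_start (Suc k) - block_start k"
  have G: "G \<ge> Suc k" using block_start_Suc[of k] by (simp add: G_def)
  have d_head: "d j = 0" if "j < G" for j
  proof -
    have "j < block_start (Suc k) - block_start k" using that by (simp add: G_def)
    from hc_seq_block[OF this] have "hc_seq (j + block_start k) = targets k j / bweight_prod_from j (block_start k)"
      by (simp add: add.commute)
    then show ?thesis using bweight_prod_from_nonzero[of j "block_start k"]
      by (simp add: d_def backward_shift_pow)
  qed
  have d_tail: "cmod (d j) powr q \<le> bweight_max_q ^ block_start k * cmod (hc_seq (j + block_start k)) powr q" if "j \<ge> G" for j
  proof -
    have "targets k j = 0" using that G by (intro targets_support) simp
    then have "cmod (d j) powr q = cmod (bweight_prod_from j (block_start k)) powr q * cmod (hc_seq (j + block_start k)) powr q"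
      by (simp add: d_def backward_shift_pow norm_mult powr_mult)
    also have "\<dots> \<le> bweight_max_q ^ block_start k * cmod (hc_seq (j + block_start k)) powr q"
      by (intro mult_right_mono bweight_prod_from_powr_le) auto
    finally show ?thesis .
  qed
  have b: "(\<Sum>j<J. cmod (d j) powr q) \<le> (1/2) ^ k" for J
  proof -
    have "(\<Sum>j<J. cmod (d j) powr q) \<le> (\<Sum>j<J + G. cmod (d j) powr q)"
      by (intro sum_mono2) auto
    also have "\<dots> = (\<Sum>j\<in>{0..<G}. cmod (d j) powr q) + (\<Sum>j\<in>{G..<J + G}. cmod (d j) powr q)"
      by (simp add: atLeast0LessThan[symmetric] sum.atLeastLessThan_concat)
    also have "(\<Sum>j\<in>{0..<G}. cmod (d j) powr q) = 0" using d_head q by simp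
    also have "(\<Sum>j\<in>{G..<J + G}. cmod (d j) powr q) \<le> (\<Sum>j\<in>{G..<J + G}. bweight_max_q ^ block_start k * cmod (hc_seq (j + block_start k)) powr q)"
      by (intro sum_mono d_tail) auto
    also have "\<dots> = bweight_max_q ^ block_start k * (\<Sum>n\<in>{G + block_start k..<J + G + block_start k}. cmod (hc_seq n) powr q)"
      by (simp add: sum_distrib_left sum.shift_bounds_nat_ivl)
    also have "G + block_start k = block_start (Suc k)" using block_start_Suc[of k]
      by (simp add: G_def)
    also have "(\<Sum>n\<in>{block_start (Suc k)..<J + G + block_start k}. cmod (hc_seq n) powr q) \<le> (\<Sum>n\<in>{block_start (Suc k)..<block_start (J + G + block_start k)}. cmod (hc_seq n) powr q)"
      using block_start_ge[of "J + G + block_start k"] by (intro sum_mono2) auto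
    also have "\<dots> \<le> (1/2) ^ k / bweight_max_q ^ block_start k" by (rule hc_seq_tail_le)
    finally show ?thesis using bweight_max_q_ge_1 by (simp add: mult_left_mono field_simps)
  qed
  have "lp q d" unfolding lp_def by (rule summableI_nonneg_bounded[OF _ b]) simp
  then have "lpsum q d \<le> (1/2) ^ k" unfolding lp_def lpsum_def by (intro suminf_le_const b)
  then show ?thesis by (simp add: d_def[abs_def])
qed

end

lemma rational_functionals_dense:
  assumes \<psi>: "\<psi> \<in> dual a b p" and e: "e > 0"
  obtains l where "dual_norm a b p (\<lambda>f. \<psi> f - functional (seq_of_rat_list l) f) < e"
proof -
  obtain N s where s: "lp q s" "\<forall>n\<ge>N. s n = 0" "dual_norm a b p (\<lambda>f. \<psi> f - functional s f) < e / 2"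
    using finite_functionals_dense[OF \<psi>, of "e / 2"] e by auto
  define \<eta> where "\<eta> = (e / 2) powr q / pairing_bound"
  have \<eta>: "\<eta> > 0" using e pairing_bound_pos by (simp add: \<eta>_def)
  define \<delta> where "\<delta> = (\<eta> / (N + 1)) powr (1/q)"
  obtain l where l: "length l = N" "\<And>n. n < N \<Longrightarrow> cmod (s n - seq_of_rat_list l n) < \<delta>"
    using rat_list_approx[of \<delta> N s] \<eta> by (auto simp: \<delta>_def)
  have l0: "seq_of_rat_list l n = 0" if "n \<ge> N" for n using that l(1)
    by (simp add: seq_of_rat_list_def)
  have lpl: "lp q (seq_of_rat_list l)" using lp_seq_of_rat_list q by auto
  have "lpsum q (\<lambda>n. s n - seq_of_rat_list l n) \<le> real N * \<delta> powr q"
    using s(2) l0 l(2) q by (intro lpsum_le_finite_support) (auto intro: less_imp_le)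
  also have "real N * \<delta> powr q = real N * \<eta> / (N + 1)" using \<eta> q by (simp add: \<delta>_def powr_powr)
  also have "\<dots> < \<eta>" using \<eta> by (simp add: field_simps)
  finally have "(pairing_bound * lpsum q (\<lambda>n. s n - seq_of_rat_list l n)) powr (1/q) < (pairing_bound * \<eta>) powr (1/q)"
    using pairing_bound_pos lpsum_nonneg[OF lp_diff_q[OF s(1) lpl]] q
    by (intro powr_less_mono2) auto
  also have "(pairing_bound * \<eta>) powr (1/q) = e / 2"
    using e q pairing_bound_pos by (simp add: \<eta>_def powr_powr)
  finally have "dual_norm a b p (\<lambda>f. functional s f - functional (seq_of_rat_list l) f) < e / 2"
    using dual_norm_functional_diff_le[OF s(1) lpl] by linarith
  with s(3) dual_norm_triangle[OF \<psi> functional_dual[OF s(1)] functional_dual[OF lpl]]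
  have "dual_norm a b p (\<lambda>f. \<psi> f - functional (seq_of_rat_list l) f) < e" by linarith
  then show ?thesis by (rule that)
qed

lemma hypercyclic_if_unbounded:
  assumes unb: "\<not> bdd_above (range (\<lambda>n. cmod (bweight_prod n)))"
  shows "adj_hypercyclic a b p w"
proof -
  obtain m where m: "m 0 = 0" "\<And>k. m (Suc k) \<ge> m k + Suc k"
    "\<And>k j. j < Suc (Suc k) \<Longrightarrow>
       target_bound rational_targets (Suc k) / tolerance (Suc k) (m k) \<le> cmod (bweight_prod_from j (m (Suc k)))"
    using block_starts_exist[OF unb] by blast
  define x0 where "x0 = hc_seq rational_targets m"
  have x0: "lp q x0" unfolding x0_def by (rule lp_hc_seq[OF rational_targets_support m])
  have "\<exists>n. dual_norm a b p (\<lambda>f. (Fw_adj a b p w ^^ n) (functional x0) f - \<psi> f) < e"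
    if \<psi>: "\<psi> \<in> dual a b p" and e: "e > 0" for \<psi> e
  proof -
    obtain l where l: "dual_norm a b p (\<lambda>f. \<psi> f - functional (seq_of_rat_list l) f) < e / 2"
      using rational_functionals_dense[OF \<psi>, of "e / 2"] e by auto
    have "(\<lambda>k. pairing_bound * (1/2::real) ^ k) \<longlonglongrightarrow> 0"
      by (intro tendsto_mult_right_zero LIMSEQ_power_zero) auto
    from tendsto_zero_powrI[OF this tendsto_const[of "1/q"]]
    have "(\<lambda>k. (pairing_bound * (1/2) ^ k) powr (1/q)) \<longlonglongrightarrow> 0"
      using q pairing_bound_pos by (auto intro!: always_eventually)
    then obtain M where M: "\<And>k. k \<ge> M \<Longrightarrow> (pairing_bound * (1/2) ^ k) powr (1/q) < e / 2"
      using order_tendstoD(2)[of _ 0 sequentially "e / 2"] e by (auto simp: eventually_sequentially)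
    obtain k where k: "k \<ge> M" "rational_targets k = seq_of_rat_list l"
      using rational_targets_eq by blast
    let ?y = "(backward_shift ^^ m k) x0"
    have lpl: "lp q (seq_of_rat_list l)" using lp_seq_of_rat_list q by auto
    have "dual_norm a b p (\<lambda>f. functional ?y f - functional (seq_of_rat_list l) f)
        \<le> (pairing_bound * lpsum q (\<lambda>j. ?y j - seq_of_rat_list l j)) powr (1/q)"
      by (rule dual_norm_functional_diff_le[OF lp_backward_shift_pow[OF x0] lpl])
    also have "\<dots> \<le> (pairing_bound * (1/2) ^ k) powr (1/q)"
      using backward_shift_hc_seq_approx[OF rational_targets_support m, of k] k(2) q pairing_bound_pos
        lpsum_nonneg[OF lp_diff_q[OF lp_backward_shift_pow[OF x0] lpl]]
      by (intro powr_mono2 mult_left_mono) (auto simp: x0_def)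
    also have "\<dots> < e / 2" using M k(1) by blast
    finally have "dual_norm a b p (\<lambda>f. functional ?y f - functional (seq_of_rat_list l) f) < e / 2" .
    then have "dual_norm a b p (\<lambda>f. functional ?y f - \<psi> f) < e"
      using l dual_norm_triangle[OF functional_dual[OF lp_backward_shift_pow[OF x0, of "m k"]] functional_dual[OF lpl] \<psi>]
        dual_norm_commute[of "functional (seq_of_rat_list l)" \<psi>] by linarith
    then show ?thesis by (intro exI[of _ "m k"]) (simp add: Fw_adj_pow_functional[OF x0])
  qed
  then show ?thesis unfolding adj_hypercyclic_def using functional_dual[OF x0] by blast
qed


section \<open>Weak limits of orbits force unbounded weight products\<close>

lemma taylor_coeff_monomial: "taylor_coeff (monomial m) k = (if k = m then 1 else 0)"
  using represents_taylor_coeff[OF represents_monomial, of m k] a_nonzero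
  by (simp add: monomial_coefs_def taylor_of_solve_coefs)

lemma monomial_in_lpab: "monomial m \<in> lpab a b p" using represents_monomial unfolding lpab_def
  by blast

lemma Fw_monomial: "Fw a b w (monomial m) = (\<lambda>z. w m * monomial (Suc m) z)"
proof
  fix z show "Fw a b w (monomial m) z = w m * monomial (Suc m) z"
  proof (cases "z \<in> disc")
    case True
    have "(\<lambda>k. taylor_coeff (monomial m) k * w k * z ^ Suc k) = (\<lambda>k. if k = m then w m * z ^ Suc m else 0)"
      by (auto simp: taylor_coeff_monomial)
    then have "(\<lambda>k. taylor_coeff (monomial m) k * w k * z ^ Suc k) sums (w m * z ^ Suc m)"
      using sums_single[of m "\<lambda>_. w m * z ^ Suc m"] by simp
    then show ?thesis using True by (simp add: Fw_def sums_iff monomial_def)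
  qed (simp add: Fw_def monomial_def)
qed

definition w_prod where "w_prod j n = (\<Prod>i\<in>{j..<j+n}. w i)"

lemma Fw_pow_monomial: "(Fw a b w ^^ n) (monomial j) = (\<lambda>z. w_prod j n * monomial (j + n) z)"
proof (induction n)
  case 0 then show ?case by (simp add: w_prod_def)
next
  case (Suc n)
  have "(Fw a b w ^^ Suc n) (monomial j) = Fw a b w (\<lambda>z. w_prod j n * monomial (j + n) z)"
    by (simp add: Suc)
  also have "\<dots> = (\<lambda>z. w_prod j n * Fw a b w (monomial (j + n)) z)"
    by (rule Fw_scale[OF monomial_in_lpab])
  also have "\<dots> = (\<lambda>z. w_prod j (Suc n) * monomial (j + Suc n) z)"
    by (simp add: Fw_monomial w_prod_def mult_ac)
  finally show ?case .
qed

lemma bweight_prod_from_w_prod: "bweight_prod_from j n = w_prod j n * a j / a (j + n)"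
proof (induction n)
  case 0 then show ?case using a_nonzero by (simp add: bweight_prod_from_def w_prod_def)
next
  case (Suc n)
  have "bweight_prod_from j (Suc n) = bweight_prod_from j n * bweight (j + n)"
    by (simp add: bweight_prod_from_def)
  also have "\<dots> = w_prod j (Suc n) * a j / a (j + Suc n)"
    using a_nonzero by (simp add: Suc w_prod_def bweight_def field_simps)
  finally show ?case .
qed

lemma solve_coefs_zero: "(\<And>k. k < m \<Longrightarrow> \<rho> k = 0) \<Longrightarrow> k < m \<Longrightarrow> solve_coefs \<rho> k = 0"
  by (induction k) auto

lemma monomial_coefs_zero: "k < m \<Longrightarrow> monomial_coefs m k = 0"
  unfolding monomial_coefs_def by (rule solve_coefs_zero) auto

lemma bidual_eval: assumes "g \<in> lpab a b p" shows "(\<lambda>\<theta>. \<theta> g) \<in> bidual a b p"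
  unfolding bidual_def
proof (intro CollectI conjI ballI allI exI[of _ "lpab_norm a b p g"])
  fix \<theta> assume "\<theta> \<in> dual a b p"
  then show "cmod (\<theta> g) \<le> lpab_norm a b p g * dual_norm a b p \<theta>"
    using dual_norm_bound[OF dual_bounded_functional assms] by (simp add: mult.commute)
qed auto

lemma norm_functional_monomial_le:
  assumes bf: "bounded_functional \<phi>"
  shows "cmod (\<phi> (monomial m)) \<le>
    solve_bound powr (1/p) / cmod (a m) * lpsum q (tail m (basis_values \<phi>)) powr (1/q)"
proof -
  let ?c = "basis_values \<phi>"
  have c: "lp q ?c" by (rule lq_basis_values(1)[OF bf])
  define T where "T m = lpsum q (tail m ?c) powr (1/q)" for m
  have s: "(\<lambda>k. monomial_coefs m k * ?c k) sums \<phi> (monomial m)"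
    using dual_sums[OF bf monomial_in_lpab] coefs_eq[OF represents_monomial] by simp
  have "(\<lambda>k. monomial_coefs m k * ?c k) = (\<lambda>k. monomial_coefs m k * tail m ?c k)"
    by (auto simp: tail_def monomial_coefs_zero)
  with s have "\<phi> (monomial m) = (\<Sum>k. monomial_coefs m k * tail m ?c k)" by (simp add: sums_iff)
  then have h1: "cmod (\<phi> (monomial m)) \<le> lpsum p (monomial_coefs m) powr (1/p) * T m"
    unfolding T_def using holder_pq(2)[OF represents_lp[OF represents_monomial] lp_tail[OF c]]
    by simp
  have h2: "lpsum p (monomial_coefs m) powr (1/p) \<le> solve_bound powr (1/p) / cmod (a m)"
  proof -
    have am: "cmod (a m) > 0" using a_nonzero by simp
    have n0: "lpsum p (monomial_coefs m) \<ge> 0"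
      by (rule lpsum_nonneg[OF represents_lp[OF represents_monomial]])
    have "lpsum p (monomial_coefs m) \<le> solve_bound / cmod (a m) powr p"
      using lpsum_monomial_coefs_le[of m] am by (simp add: field_simps)
    then have "lpsum p (monomial_coefs m) powr (1/p) \<le> (solve_bound / cmod (a m) powr p) powr (1/p)"
      using n0 p_gt_1 by (intro powr_mono2) auto
    also have "\<dots> = solve_bound powr (1/p) / cmod (a m)"
      using am p_gt_1 solve_bound_pos by (simp add: powr_divide powr_powr)
    finally show ?thesis .
  qed
  have "T m \<ge> 0" by (simp add: T_def)
  with h1 h2 have "cmod (\<phi> (monomial m)) \<le> solve_bound powr (1/p) / cmod (a m) * T m"
    by (meson mult_right_mono order.trans)
  then show ?thesis by (simp add: T_def)
qed

lemma Fw_adj_pow_monomial_tendsto_0: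
  assumes \<phi>: "\<phi> \<in> dual a b p" and bdd: "\<And>n. cmod (bweight_prod n) \<le> M0"
  shows "(\<lambda>n. (Fw_adj a b p w ^^ n) \<phi> (monomial j)) \<longlonglongrightarrow> 0"
proof -
  have bf: "bounded_functional \<phi>" by (rule dual_bounded_functional[OF \<phi>])
  let ?c = "basis_values \<phi>"
  have c: "lp q ?c" by (rule lq_basis_values(1)[OF bf])
  define T where "T m = lpsum q (tail m ?c) powr (1/q)" for m
  have T: "T \<longlonglongrightarrow> 0" unfolding T_def
    using q by (intro lpsum_tail_powr_tendsto_0[OF c]) auto
  have monomial_bound: "cmod (\<phi> (monomial m)) \<le> solve_bound powr (1/p) / cmod (a m) * T m" for m
    unfolding T_def by (rule norm_functional_monomial_le[OF bf])
  define K where "K = M0 / cmod (bweight_prod j) / cmod (a j) * solve_bound powr (1/p)"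
  have val: "(Fw_adj a b p w ^^ n) \<phi> (monomial j) = w_prod j n * \<phi> (monomial (j + n))" for n
    using Fw_adj_pow_apply[OF monomial_in_lpab, of n \<phi> j] Fw_pow_monomial[of n j] bounded_functional_scale[OF bf monomial_in_lpab]
    by simp
  have bnd: "cmod ((Fw_adj a b p w ^^ n) \<phi> (monomial j)) \<le> K * T (n + j)" for n
  proof -
    have w_prod_div: "w_prod j n / a (j + n) = bweight_prod_from j n / a j"
      using bweight_prod_from_w_prod[of j n] a_nonzero by (simp add: field_simps)
    have prod_bound: "cmod (bweight_prod_from j n) \<le> M0 / cmod (bweight_prod j)"
    proof -
      have "cmod (bweight_prod j) * cmod (bweight_prod_from j n) \<le> M0" using bdd[of "j + n"]
        by (simp add: bweight_prod_add norm_mult)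
      moreover have "cmod (bweight_prod j) > 0" using bweight_prod_nonzero[of j] by simp
      ultimately show ?thesis by (simp add: pos_le_divide_eq mult.commute)
    qed
    have Tn: "T (j + n) \<ge> 0" by (simp add: T_def)
    have "cmod ((Fw_adj a b p w ^^ n) \<phi> (monomial j)) = cmod (w_prod j n) * cmod (\<phi> (monomial (j + n)))"
      by (simp add: val norm_mult)
    also have "\<dots> \<le> cmod (w_prod j n) * (solve_bound powr (1/p) / cmod (a (j + n)) * T (j + n))"
      by (intro mult_left_mono monomial_bound) auto
    also have "\<dots> = cmod (w_prod j n / a (j + n)) * solve_bound powr (1/p) * T (j + n)"
      by (simp add: norm_divide)
    also have "\<dots> = cmod (bweight_prod_from j n) / cmod (a j) * solve_bound powr (1/p) * T (j + n)"
      by (simp add: w_prod_div norm_divide)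
    also have "\<dots> \<le> M0 / cmod (bweight_prod j) / cmod (a j) * solve_bound powr (1/p) * T (j + n)"
      using prod_bound Tn by (intro mult_right_mono divide_right_mono) auto
    finally show ?thesis by (simp add: K_def add.commute)
  qed
  have "(\<lambda>n. K * T (n + j)) \<longlonglongrightarrow> K * 0"
    by (intro tendsto_mult tendsto_const LIMSEQ_ignore_initial_segment[OF T])
  then have t0: "(\<lambda>n. K * T (n + j)) \<longlonglongrightarrow> 0" by simp
  have ev: "eventually (\<lambda>n. norm ((Fw_adj a b p w ^^ n) \<phi> (monomial j)) \<le> K * T (n + j)) sequentially"
    using bnd by (intro always_eventually allI) simp
  show ?thesis by (rule Lim_null_comparison[OF ev t0])
qed

lemma basis_eq_monomials: "basis n = (\<lambda>z. a n * monomial n z + b n * monomial (Suc n) z)"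
  by (auto simp: basis_def monomial_def fab_def algebra_simps)

lemma unbounded_if_weak_limit:
  assumes \<phi>: "\<phi> \<in> dual a b p" and \<psi>: "\<psi> \<in> dual a b p" and nz: "\<psi> \<noteq> (\<lambda>f. 0)"
    and sm: "strict_mono nk"
    and lim: "\<forall>\<Lambda>\<in>bidual a b p. (\<lambda>k. \<Lambda> ((Fw_adj a b p w ^^ nk k) \<phi>)) \<longlonglongrightarrow> \<Lambda> \<psi>"
  shows "\<not> bdd_above (range (\<lambda>n. cmod (bweight_prod n)))"
proof
  assume "bdd_above (range (\<lambda>n. cmod (bweight_prod n)))"
  then obtain M0 where M0: "\<And>n. cmod (bweight_prod n) \<le> M0" by (auto simp: bdd_above_def)
  have blp: "bounded_functional \<psi>" by (rule dual_bounded_functional[OF \<psi>])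
  have G0: "\<psi> (monomial j) = 0" for j
  proof -
    have "(\<lambda>k. (Fw_adj a b p w ^^ nk k) \<phi> (monomial j)) \<longlonglongrightarrow> \<psi> (monomial j)"
      using lim bidual_eval[OF monomial_in_lpab, of j] by auto
    moreover have "(\<lambda>k. (Fw_adj a b p w ^^ nk k) \<phi> (monomial j)) \<longlonglongrightarrow> 0"
      using LIMSEQ_subseq_LIMSEQ[OF Fw_adj_pow_monomial_tendsto_0[OF \<phi> M0] sm] by (simp add: o_def)
    ultimately show ?thesis by (rule LIMSEQ_unique)
  qed
  have c0: "basis_values \<psi> n = 0" for n
    unfolding basis_values_def basis_eq_monomials
    using bounded_functional_add[OF blp lpab_scale[OF monomial_in_lpab] lpab_scale[OF monomial_in_lpab]]
      bounded_functional_scale[OF blp monomial_in_lpab] G0 by simp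
  have "\<psi> f = 0" for f
  proof (cases "f \<in> lpab a b p")
    case True
    from dual_sums[OF blp True] have "(\<lambda>n. 0) sums \<psi> f" by (simp add: c0)
    then show ?thesis using sums_zero sums_unique2 by blast
  next
    case False then show ?thesis using \<psi> by (simp add: dual_iff)
  qed
  with nz show False by auto
qed




section \<open>Dense orbits return at arbitrarily late times\<close>

definition delta0 :: "nat \<Rightarrow> complex" where "delta0 n = (if n = 0 then 1 else 0)"

definition coef0_functional where "coef0_functional = functional delta0"

lemma lp_delta0: "lp q delta0"
  by (rule lp_finite_support[of 1]) (use q in \<open>auto simp: delta0_def\<close>)

lemma coef0_functional_dual: "coef0_functional \<in> dual a b p"
  unfolding coef0_functional_def by (rule functional_dual[OF lp_delta0])

lemma coef0_functional_basis0: "coef0_functional (basis 0) = 1"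
proof -
  have "(\<lambda>n. coefs a b p (basis 0) n * pairing_seq delta0 n) = (\<lambda>n. if n = 0 then 1 else 0)"
    by (auto simp: coefs_eq[OF represents_basis] pairing_seq_def delta0_def)
  then have "(\<lambda>n. coefs a b p (basis 0) n * pairing_seq delta0 n) sums 1"
    using sums_single[of 0 "\<lambda>_. 1::complex"] by simp
  then show ?thesis
    unfolding coef0_functional_def using functional_sums[OF lp_delta0 basis_in_lpab]
    by (metis sums_unique2)
qed

definition perturb :: "cfunctional \<Rightarrow> real \<Rightarrow> cfunctional" where
  "perturb \<psi> c = (\<lambda>f. \<psi> f + complex_of_real c * coef0_functional f)"

lemma perturb_dual: "\<psi> \<in> dual a b p \<Longrightarrow> perturb \<psi> c \<in> dual a b p"
  unfolding perturb_def by (rule dual_lincomb[OF _ coef0_functional_dual])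

lemma dual_norm_perturb_le:
  assumes "c \<ge> 0"
  shows "dual_norm a b p (\<lambda>f. perturb \<psi> c f - \<psi> f) \<le> c * dual_norm a b p coef0_functional"
proof (rule dual_norm_le)
  show "0 \<le> c * dual_norm a b p coef0_functional"
    using assms dual_norm_nonneg[OF dual_bounded_functional[OF coef0_functional_dual]] by simp
  fix f assume f: "f \<in> lpab a b p"
  have "cmod (coef0_functional f) \<le> dual_norm a b p coef0_functional * lpab_norm a b p f"
    by (rule dual_norm_bound[OF dual_bounded_functional[OF coef0_functional_dual] f])
  then show "cmod (perturb \<psi> c f - \<psi> f) \<le> c * dual_norm a b p coef0_functional * lpab_norm a b p f"
    using assms by (simp add: perturb_def norm_mult mult.assoc mult_left_mono)
qed

lemma perturb_unique:
  assumes "\<theta> \<in> dual a b p" "\<psi> \<in> dual a b p"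
    and "dual_norm a b p (\<lambda>f. \<theta> f - perturb \<psi> c f) = 0" "dual_norm a b p (\<lambda>f. \<theta> f - perturb \<psi> c' f) = 0"
  shows "c = c'"
proof -
  have key: "\<theta> (basis 0) = perturb \<psi> c'' (basis 0)"
    if "dual_norm a b p (\<lambda>f. \<theta> f - perturb \<psi> c'' f) = 0" for c''
    using dual_norm_bound[OF dual_bounded_functional[OF dual_minus[OF assms(1) perturb_dual[OF assms(2), of c'']]]
        basis_in_lpab[of 0]] that
    by simp
  have "perturb \<psi> c (basis 0) = perturb \<psi> c' (basis 0)"
    using key[OF assms(3)] key[OF assms(4)] by simp
  then show ?thesis by (simp add: perturb_def coef0_functional_basis0)
qed

text \<open>A dense orbit returns near every point at arbitrarily late times: the finitely many early
  orbit points can be avoided by aiming at a perturbation of the target that none of them equals.\<close>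

lemma hypercyclic_returns:
  assumes \<phi>: "\<phi> \<in> dual a b p"
    and dense: "\<forall>\<psi>\<in>dual a b p. \<forall>e>0. \<exists>n. dual_norm a b p (\<lambda>f. (Fw_adj a b p w ^^ n) \<phi> f - \<psi> f) < e"
    and \<psi>: "\<psi> \<in> dual a b p" and \<epsilon>: "\<epsilon> > 0"
  shows "\<exists>n>N. dual_norm a b p (\<lambda>f. (Fw_adj a b p w ^^ n) \<phi> f - \<psi> f) < \<epsilon>"
proof -
  let ?F = "\<lambda>n. (Fw_adj a b p w ^^ n) \<phi>"
  define U where "U = dual_norm a b p coef0_functional + 1"
  have U: "U > 0" using dual_norm_nonneg[OF dual_bounded_functional[OF coef0_functional_dual]]
    by (simp add: U_def)
  define d where "d n c = dual_norm a b p (\<lambda>f. ?F n f - perturb \<psi> c f)" for n c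
  have d_nonneg: "d n c \<ge> 0" for n c
    unfolding d_def using dual_minus[OF Fw_adj_pow_dual[OF \<phi>] perturb_dual[OF \<psi>]]
    by (intro dual_norm_nonneg dual_bounded_functional)
  have unique: "c = c'" if "d n c = 0" "d n c' = 0" for n c c'
    using perturb_unique[OF Fw_adj_pow_dual[OF \<phi>] \<psi>] that unfolding d_def by blast
  have "{c. \<exists>n\<le>N. d n c = 0} \<subseteq> (\<lambda>n. THE c. d n c = 0) ` {..N}"
  proof
    fix c assume "c \<in> {c. \<exists>n\<le>N. d n c = 0}"
    then obtain n where n: "n \<le> N" "d n c = 0" by blast
    then have "(THE c. d n c = 0) = c" using unique by (intro the_equality) auto
    with n show "c \<in> (\<lambda>n. THE c. d n c = 0) ` {..N}" by force
  qed
  then have "finite {c. \<exists>n\<le>N. d n c = 0}" by (rule finite_surj[OF finite_atMost])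
  then have "infinite ({0<..<\<epsilon> / (2 * U)} - {c. \<exists>n\<le>N. d n c = 0})"
    using \<epsilon> U by (intro Diff_infinite_finite) auto
  then obtain c where "c \<in> {0<..<\<epsilon> / (2 * U)} - {c. \<exists>n\<le>N. d n c = 0}"
    using infinite_imp_nonempty by blast
  then have c: "0 < c" "c < \<epsilon> / (2 * U)" "\<And>n. n \<le> N \<Longrightarrow> d n c > 0"
    using d_nonneg by (auto simp: less_le)
  have close: "dual_norm a b p (\<lambda>f. perturb \<psi> c f - \<psi> f) < \<epsilon> / 2"
  proof -
    have "dual_norm a b p (\<lambda>f. perturb \<psi> c f - \<psi> f) \<le> c * (U - 1)"
      using dual_norm_perturb_le[of c \<psi>] c by (simp add: U_def)
    also have "\<dots> \<le> c * U" using c by simp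
    also have "\<dots> < \<epsilon> / 2" using c U by (simp add: field_simps)
    finally show ?thesis .
  qed
  define \<delta> where "\<delta> = min (\<epsilon> / 2) (Min ((\<lambda>n. d n c) ` {..N}))"
  have \<delta>: "\<delta> > 0" unfolding \<delta>_def using \<epsilon> c(3) by (simp add: Min_gr_iff)
  obtain n where n: "d n c < \<delta>" using dense perturb_dual[OF \<psi>] \<delta> unfolding d_def by blast
  have late: "n > N"
  proof (rule ccontr)
    assume "\<not> n > N"
    then have "\<delta> \<le> d n c" unfolding \<delta>_def by (intro min.coboundedI2 Min_le) auto
    with n show False by simp
  qed
  have "dual_norm a b p (\<lambda>f. ?F n f - \<psi> f) \<le> d n c + dual_norm a b p (\<lambda>f. perturb \<psi> c f - \<psi> f)"
    unfolding d_def by (rule dual_norm_triangle[OF Fw_adj_pow_dual[OF \<phi>] perturb_dual[OF \<psi>] \<psi>])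
  moreover have "\<delta> \<le> \<epsilon> / 2" by (simp add: \<delta>_def)
  ultimately have "dual_norm a b p (\<lambda>f. ?F n f - \<psi> f) < \<epsilon>" using n close by linarith
  with late show ?thesis by blast
qed

lemma norm_limit_if_hypercyclic:
  assumes "adj_hypercyclic a b p w"
  shows "\<exists>\<phi>\<in>dual a b p. \<exists>\<psi>\<in>dual a b p. \<exists>nk :: nat \<Rightarrow> nat. \<psi> \<noteq> (\<lambda>f. 0) \<and> strict_mono nk \<and>
           (\<lambda>k. dual_norm a b p (\<lambda>f. (Fw_adj a b p w ^^ nk k) \<phi> f - \<psi> f)) \<longlonglongrightarrow> 0"
proof -
  obtain \<phi> where \<phi>: "\<phi> \<in> dual a b p"
    and dense: "\<forall>\<psi>\<in>dual a b p. \<forall>e>0. \<exists>n. dual_norm a b p (\<lambda>f. (Fw_adj a b p w ^^ n) \<phi> f - \<psi> f) < e"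
    using assms unfolding adj_hypercyclic_def by blast
  let ?d = "\<lambda>n. dual_norm a b p (\<lambda>f. (Fw_adj a b p w ^^ n) \<phi> f - coef0_functional f)"
  have returns: "\<exists>n>N. ?d n < inverse (Suc k)" for N k
    using hypercyclic_returns[OF \<phi> dense coef0_functional_dual, of "inverse (Suc k)" N] by simp
  have "\<exists>nk. \<forall>k. ?d (nk k) < inverse (Suc k) \<and> nk k < nk (Suc k)"
    by (rule dependent_nat_choice[where P = "\<lambda>k n. ?d n < inverse (Suc k)" and Q = "\<lambda>k n n'. n < n'"])
      (use returns in blast)+
  then obtain nk where nk: "\<And>k. ?d (nk k) < inverse (Suc k)" "strict_mono nk"
    unfolding strict_mono_Suc_iff by blast
  have "?d (nk k) \<ge> 0" for k
    using dual_minus[OF Fw_adj_pow_dual[OF \<phi>] coef0_functional_dual]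
    by (intro dual_norm_nonneg dual_bounded_functional)
  then have "(\<lambda>k. ?d (nk k)) \<longlonglongrightarrow> 0"
    using nk(1)
    by (intro Lim_null_comparison[OF _ LIMSEQ_inverse_real_of_nat] always_eventually allI)
      (simp add: less_imp_le)
  moreover have "coef0_functional \<noteq> (\<lambda>f. 0)"
    using coef0_functional_basis0 by (metis zero_neq_one)
  ultimately show ?thesis using \<phi> coef0_functional_dual nk(2) by blast
qed

lemma weak_limit_if_norm_limit:
  assumes \<phi>: "\<phi> \<in> dual a b p" and \<psi>: "\<psi> \<in> dual a b p"
    and lim: "(\<lambda>k. dual_norm a b p (\<lambda>f. (Fw_adj a b p w ^^ nk k) \<phi> f - \<psi> f)) \<longlonglongrightarrow> 0"
  shows "\<forall>\<Lambda>\<in>bidual a b p. (\<lambda>k. \<Lambda> ((Fw_adj a b p w ^^ nk k) \<phi>)) \<longlonglongrightarrow> \<Lambda> \<psi>"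
proof
  fix \<Lambda> assume \<Lambda>: "\<Lambda> \<in> bidual a b p"
  obtain C where C: "\<And>\<theta>. \<theta> \<in> dual a b p \<Longrightarrow> cmod (\<Lambda> \<theta>) \<le> C * dual_norm a b p \<theta>"
    using \<Lambda> unfolding bidual_def by blast
  have add: "\<And>\<theta>1 \<theta>2. \<theta>1 \<in> dual a b p \<Longrightarrow> \<theta>2 \<in> dual a b p \<Longrightarrow> \<Lambda> (\<lambda>f. \<theta>1 f + \<theta>2 f) = \<Lambda> \<theta>1 + \<Lambda> \<theta>2"
    and scl: "\<And>c \<theta>. \<theta> \<in> dual a b p \<Longrightarrow> \<Lambda> (\<lambda>f. c * \<theta> f) = c * \<Lambda> \<theta>"
    using \<Lambda> unfolding bidual_def by blast+
  let ?A = "\<lambda>k. (Fw_adj a b p w ^^ nk k) \<phi>"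
  have Ad: "?A k \<in> dual a b p" for k by (rule Fw_adj_pow_dual[OF \<phi>])
  have m\<psi>: "(\<lambda>f. -1 * \<psi> f) \<in> dual a b p" using dual_lincomb[OF \<psi> \<psi>, of "-2"]
    by (simp add: algebra_simps)
  have diff: "\<Lambda> (?A k) - \<Lambda> \<psi> = \<Lambda> (\<lambda>f. ?A k f - \<psi> f)" for k
  proof -
    have "\<Lambda> (\<lambda>f. ?A k f + (-1) * \<psi> f) = \<Lambda> (?A k) + \<Lambda> (\<lambda>f. -1 * \<psi> f)"
      using add[OF Ad m\<psi>] by simp
    also have "\<Lambda> (\<lambda>f. -1 * \<psi> f) = - \<Lambda> \<psi>" using scl[OF \<psi>, of "-1"] by simp
    finally show ?thesis by simp
  qed
  have "(\<lambda>k. C * dual_norm a b p (\<lambda>f. ?A k f - \<psi> f)) \<longlonglongrightarrow> C * 0"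
    by (intro tendsto_mult tendsto_const lim)
  then have t: "(\<lambda>k. C * dual_norm a b p (\<lambda>f. ?A k f - \<psi> f)) \<longlonglongrightarrow> 0" by simp
  have ev: "eventually (\<lambda>k. norm (\<Lambda> (?A k) - \<Lambda> \<psi>) \<le> C * dual_norm a b p (\<lambda>f. ?A k f - \<psi> f)) sequentially"
    by (intro always_eventually allI) (simp add: diff C[OF dual_minus[OF Ad \<psi>]])
  have "(\<lambda>k. \<Lambda> (?A k) - \<Lambda> \<psi>) \<longlonglongrightarrow> 0" by (rule Lim_null_comparison[OF ev t])
  then show "(\<lambda>k. \<Lambda> (?A k)) \<longlonglongrightarrow> \<Lambda> \<psi>" by (rule LIM_zero_cancel)
qed

end

theorem mainTheorem12:
  fixes a b w :: "nat \<Rightarrow> complex" and p :: real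
  assumes "1 < p"
    and "\<And>n. a n \<noteq> 0" and "\<And>n. b n \<noteq> 0"
    and "limsup (\<lambda>n. ereal ((cmod (a n) + cmod (b n)) powr (1 / real n))) < \<infinity>"
    and "\<And>n. w n \<noteq> 0"
    and "bdd_above (range (\<lambda>n. cmod (w n * a n / a (Suc n))))"
    and "limsup (\<lambda>n. ereal (cmod (b n / a (Suc n)))) < 1"
  shows "(adj_hypercyclic a b p w \<longleftrightarrow>
            (\<exists>\<phi>\<in>dual a b p. \<exists>\<psi>\<in>dual a b p. \<exists>nk :: nat \<Rightarrow> nat. \<psi> \<noteq> (\<lambda>f. 0) \<and> strict_mono nk \<and>
               (\<forall>\<Lambda>\<in>bidual a b p. (\<lambda>k. \<Lambda> ((Fw_adj a b p w ^^ nk k) \<phi>)) \<longlonglongrightarrow> \<Lambda> \<psi>)))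
       \<and> ((\<exists>\<phi>\<in>dual a b p. \<exists>\<psi>\<in>dual a b p. \<exists>nk :: nat \<Rightarrow> nat. \<psi> \<noteq> (\<lambda>f. 0) \<and> strict_mono nk \<and>
               (\<forall>\<Lambda>\<in>bidual a b p. (\<lambda>k. \<Lambda> ((Fw_adj a b p w ^^ nk k) \<phi>)) \<longlonglongrightarrow> \<Lambda> \<psi>))
          \<longleftrightarrow>
           (\<exists>\<phi>\<in>dual a b p. \<exists>\<psi>\<in>dual a b p. \<exists>nk :: nat \<Rightarrow> nat. \<psi> \<noteq> (\<lambda>f. 0) \<and> strict_mono nk \<and>
               (\<lambda>k. dual_norm a b p (\<lambda>f. (Fw_adj a b p w ^^ nk k) \<phi> f - \<psi> f)) \<longlonglongrightarrow> 0))"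
proof -
  interpret weighted_shift a b w p using assms by unfold_locales auto
  let ?W = "\<exists>\<phi>\<in>dual a b p. \<exists>\<psi>\<in>dual a b p. \<exists>nk :: nat \<Rightarrow> nat. \<psi> \<noteq> (\<lambda>f. 0) \<and> strict_mono nk \<and>
               (\<forall>\<Lambda>\<in>bidual a b p. (\<lambda>k. \<Lambda> ((Fw_adj a b p w ^^ nk k) \<phi>)) \<longlonglongrightarrow> \<Lambda> \<psi>)"
  let ?N = "\<exists>\<phi>\<in>dual a b p. \<exists>\<psi>\<in>dual a b p. \<exists>nk :: nat \<Rightarrow> nat. \<psi> \<noteq> (\<lambda>f. 0) \<and> strict_mono nk \<and>
               (\<lambda>k. dual_norm a b p (\<lambda>f. (Fw_adj a b p w ^^ nk k) \<phi> f - \<psi> f)) \<longlonglongrightarrow> 0"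
  have "adj_hypercyclic a b p w \<Longrightarrow> ?N" by (rule norm_limit_if_hypercyclic)
  moreover have "?N \<Longrightarrow> ?W" using weak_limit_if_norm_limit by blast
  moreover have "?W \<Longrightarrow> adj_hypercyclic a b p w"
    using unbounded_if_weak_limit hypercyclic_if_unbounded by blast
  ultimately show ?thesis by blast
qed


end
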